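(* Let $\Omega$ be a Polish space and $\nu$ a positive $\sigma$-finite measure on $(-1,1)\times\Omega$ such that $\nu((-a,a)\times\Omega)=\infty$ for all $a\in(0,1]$ and $\iint_{(-1,1)\times\Omega}u^2\,\nu(du\,d\omega)<\infty$. Let $N\sim\mathrm{Po}(\nu)$ be a Poisson random measure on $(-1,1)\times\Omega$ with intensity $\nu$ and $\tilde N=N-\nu$ the compensated Poisson measure. Let $K:[0,1]\times\Omega\to\mathbb R$ be Borel measurable with $\iint_{(-1,1)\times\Omega}K(t,\omega)^2u^2\,\nu(du\,d\omega)<\infty$ for all $t\in[0,1]$, and suppose there exist $\alpha>0$ and a Borel measurable $C:\Omega\to\mathbb R_+$ with $$|K(t,\omega)-K(s,\omega)|^2\le C(\omega)\,|t-s|^{1+\alpha}\quad\text{for all } s,t\in[0,1],\ \omega\in\Omega,$$ and $\iint_{(-1,1)\times\Omega}C(\omega)\,u^2\,\nu(du\,d\omega)<\infty$. For $0<\epsilon\le1$ define $$X^\epsilon_t=\iint_{\{0<|u|<\epsilon\}\times\Omega}K(t,\omega)\,u\,\tilde N(du\,d\omega),\qquad t\in[0,1],$$ taking for each $\epsilon$ a version with continuous sample paths. Then for every $\delta>0$, $$\lim_{\epsilon\to0}{\mathbb P}\Big(\sup_{t\in[0,1]}|X^\epsilon_t|>\delta\Big)=0.$$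
   Context: A Poisson random measure $N\sim\mathrm{Po}(\nu)$ assigns independent Poisson$(\nu(B_i))$ random variables to disjoint Borel sets $B_i$. The stochastic integral against $\tilde N$ is the $L_2$ isometry from $L_2((-1,1)\times\Omega,\nu)$ to square-integrable mean-zero random variables, so ${\mathbb E}X^\epsilon_t=0$ and ${\mathbb E}(X^\epsilon_t)^2=\iint_{\{|u|<\epsilon\}\times\Omega}K(t,\omega)^2u^2\,\nu(du\,d\omega)$. *)

theory Defs
  imports "HOL-Probability.Probability"
begin

text \<open>Poisson random measure with intensity nu on the measurable space of nu,
  realised on the probability space M: for every sample x, N x is a (counting)
  measure on the same measurable space as nu.\<close>
definition poisson_random_measure ::
  "'a measure \<Rightarrow> 'b measure \<Rightarrow> ('a \<Rightarrow> 'b measure) \<Rightarrow> bool" where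
  "poisson_random_measure M nu N \<longleftrightarrow>
     prob_space M \<and>
     (\<forall>x\<in>space M. sets (N x) = sets nu) \<and>
     (\<forall>B\<in>sets nu. (\<lambda>x. emeasure (N x) B) \<in> borel_measurable M) \<and>
     (\<forall>B\<in>sets nu. emeasure nu B < \<infinity> \<longrightarrow>
        (\<forall>k::nat. measure M {x\<in>space M. emeasure (N x) B = of_nat k}
           = exp (- enn2real (emeasure nu B)) * enn2real (emeasure nu B) ^ k / fact k)) \<and>
     (\<forall>B\<in>sets nu. emeasure nu B = \<infinity> \<longrightarrow> (AE x in M. emeasure (N x) B = \<infinity>)) \<and>
     (\<forall>(I::nat set) B. finite I \<longrightarrow> (\<forall>i\<in>I. B i \<in> sets nu) \<longrightarrow> disjoint_family_on B I \<longrightarrow>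
        prob_space.indep_vars M (\<lambda>_. borel) (\<lambda>i x. emeasure (N x) (B i)) I)"

text \<open>Y is (a version of) the stochastic integral of f against the compensated
  measure N - nu: f is in L2(nu), and Y is the L2(M)-limit of the pathwise
  integrals int f 1_A dN - int f 1_A dnu along every sequence of sets A_n of finite
  nu-measure with f 1_(A_n) \<rightarrow> f in L2(nu).  This agrees with the L2-isometric
  extension from simple functions.\<close>
definition compensated_poisson_integral ::
  "'a measure \<Rightarrow> 'b measure \<Rightarrow> ('a \<Rightarrow> 'b measure) \<Rightarrow> ('b \<Rightarrow> real) \<Rightarrow> ('a \<Rightarrow> real) \<Rightarrow> bool" where
  "compensated_poisson_integral M nu N f Y \<longleftrightarrow>
     f \<in> borel_measurable nu \<and> (\<integral>\<^sup>+ z. ennreal ((f z)\<^sup>2) \<partial>nu) < \<infinity> \<and>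
     Y \<in> borel_measurable M \<and>
     (\<forall>A :: nat \<Rightarrow> 'b set.
        (\<forall>n. A n \<in> sets nu \<and> emeasure nu (A n) < \<infinity>) \<and>
        ((\<lambda>n. \<integral>\<^sup>+ z. ennreal ((f z - f z * indicator (A n) z)\<^sup>2) \<partial>nu) \<longlonglongrightarrow> 0)
        \<longrightarrow>
        ((\<lambda>n. \<integral>\<^sup>+ x. ennreal ((Y x - ((\<integral> z. f z * indicator (A n) z \<partial>(N x))
                                     - (\<integral> z. f z * indicator (A n) z \<partial>nu)))\<^sup>2) \<partial>M)
          \<longlonglongrightarrow> 0))"

end

theory Submission
  imports Defs
begin

(* X^eps_t is the compensated Poisson integral of K(t,w) u over jumps 0 < |u| < eps.  The proof is
   a second-moment argument combined with Kolmogorov-style dyadic chaining: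

   1. Counts N(B) of a Poisson random measure have mean and variance nu(B); compensated counts of
      disjoint sets are independent, which gives the L2 isometry for step integrands.
   2. Campbell's formula E (int g dN) = int g dnu makes pathwise integrals against N random
      variables; approximating by simple functions yields E (int h dN - int h dnu)^2 <= 4 int h^2 dnu
      for h in L1(nu), and from this the compensated integrals of the statement satisfy
      E (Y - Z)^2 <= 12 int (f - g)^2 dnu.
   3. A deterministic chaining lemma bounds a continuous path on [0,1] by its value at 0 and its
      dyadic increments; with Chebyshev and a union bound this gives a maximal inequality for
      processes with E (Y_t - Y_s)^2 <= |t - s|^(1+alpha) B.
   4. For X^eps both second-moment constants are integrals over the window 0 < |u| < eps of
      finite measures (K(0,.)^2 u^2 and C u^2), hence tend to 0 with eps. *)

definition poisson_weight :: "real \<Rightarrow> nat \<Rightarrow> real" where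
  "poisson_weight l k = exp (- l) * l ^ k / fact k"

lemma poisson_weight_nonneg: "0 \<le> l \<Longrightarrow> 0 \<le> poisson_weight l k"
  by (simp add: poisson_weight_def)

lemma exp_series_sums: "(\<lambda>k. l ^ k / fact k) sums exp (l::real)"
  using exp_converges[of l] by (simp add: divide_inverse_commute scaleR_conv_of_real)

lemma exp_series_shift: "real (Suc j) * (l ^ Suc j / fact (Suc j)) = (l::real) * (l ^ j / fact j)"
proof -
  have "fact (Suc j) = real (Suc j) * fact j" by simp
  then show ?thesis by (simp del: of_nat_Suc fact_Suc)
qed

lemma exp_series_first_moment: "(\<lambda>k. real k * (l ^ k / fact k)) sums ((l::real) * exp l)"
proof -
  have "(\<lambda>j. real (Suc j) * (l ^ Suc j / fact (Suc j))) sums (l * exp l)"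
    unfolding exp_series_shift by (intro sums_mult exp_series_sums)
  then show ?thesis
    using sums_Suc[where f = "\<lambda>k. real k * (l ^ k / fact k)"] by simp
qed

lemma exp_series_second_factorial_moment:
  "(\<lambda>k. real k * (real k - 1) * (l ^ k / fact k)) sums ((l::real)\<^sup>2 * exp l)"
proof -
  have shift2: "real (Suc (Suc j)) * (real (Suc (Suc j)) - 1) * (l ^ Suc (Suc j) / fact (Suc (Suc j)))
      = l\<^sup>2 * (l ^ j / fact j)" for j
  proof -
    have "real (Suc (Suc j)) * (real (Suc (Suc j)) - 1) * (l ^ Suc (Suc j) / fact (Suc (Suc j)))
        = real (Suc j) * (real (Suc (Suc j)) * (l ^ Suc (Suc j) / fact (Suc (Suc j))))"
      by (simp add: algebra_simps)
    also have "\<dots> = l * (real (Suc j) * (l ^ Suc j / fact (Suc j)))"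
      by (simp only: exp_series_shift ac_simps)
    also have "\<dots> = l\<^sup>2 * (l ^ j / fact j)"
      by (simp only: exp_series_shift) (simp add: power2_eq_square)
    finally show ?thesis .
  qed
  have "(\<lambda>j. real (Suc (Suc j)) * (real (Suc (Suc j)) - 1) * (l ^ Suc (Suc j) / fact (Suc (Suc j))))
      sums (l\<^sup>2 * exp l)"
    unfolding shift2 by (intro sums_mult exp_series_sums)
  then have "(\<lambda>j. real (Suc j) * (real (Suc j) - 1) * (l ^ Suc j / fact (Suc j))) sums (l\<^sup>2 * exp l)"
    using sums_Suc[where f = "\<lambda>j. real (Suc j) * (real (Suc j) - 1) * (l ^ Suc j / fact (Suc j))"]
    by simp
  then show ?thesis
    using sums_Suc[where f = "\<lambda>k. real k * (real k - 1) * (l ^ k / fact k)"] by simp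
qed

lemma poisson_weight_sums:
  shows "poisson_weight l sums 1"
    and "(\<lambda>k. real k * poisson_weight l k) sums l"
    and "(\<lambda>k. (real k)\<^sup>2 * poisson_weight l k) sums (l + l\<^sup>2)"
proof -
  have e: "exp (- l) * exp l = 1" by (simp add: exp_minus)
  have "(\<lambda>k. exp (- l) * (l ^ k / fact k)) sums (exp (- l) * exp l)"
    by (intro sums_mult exp_series_sums)
  then show "poisson_weight l sums 1"
    using e by (simp add: poisson_weight_def[abs_def])
  have "(\<lambda>k. exp (- l) * (real k * (l ^ k / fact k))) sums (exp (- l) * (l * exp l))"
    by (intro sums_mult exp_series_first_moment)
  then show mean: "(\<lambda>k. real k * poisson_weight l k) sums l"
    using e by (simp add: poisson_weight_def algebra_simps)
  have "(\<lambda>k. exp (- l) * (real k * (real k - 1) * (l ^ k / fact k))) sums (exp (- l) * (l\<^sup>2 * exp l))"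
    by (intro sums_mult exp_series_second_factorial_moment)
  moreover have "exp (- l) * (real k * (real k - 1) * (l ^ k / fact k))
      = real k * (real k - 1) * poisson_weight l k" for k
    by (simp add: poisson_weight_def)
  moreover have "exp (- l) * (l\<^sup>2 * exp l) = l\<^sup>2"
    using e by (simp add: mult.left_commute)
  ultimately have "(\<lambda>k. real k * (real k - 1) * poisson_weight l k) sums l\<^sup>2"
    by simp
  from sums_add[OF this mean]
  show "(\<lambda>k. (real k)\<^sup>2 * poisson_weight l k) sums (l + l\<^sup>2)"
    by (simp add: power2_eq_square algebra_simps)
qed

text \<open>For independent centred square-integrable variables the cross terms vanish, so the second
  moment of a linear combination is the weighted sum of the second moments.\<close>
lemma (in prob_space) indep_centered_sum_second_moment:
  fixes D :: "'i \<Rightarrow> 'a \<Rightarrow> real" and c :: "'i \<Rightarrow> real"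
  assumes I: "finite I" and indep: "indep_vars (\<lambda>_. borel) D I"
    and int: "\<And>i. i \<in> I \<Longrightarrow> integrable M (D i)"
    and centred: "\<And>i. i \<in> I \<Longrightarrow> expectation (D i) = 0"
    and sq_int: "\<And>i. i \<in> I \<Longrightarrow> integrable M (\<lambda>x. (D i x)\<^sup>2)"
  shows "integrable M (\<lambda>x. (\<Sum>i\<in>I. c i * D i x)\<^sup>2)"
    and "expectation (\<lambda>x. (\<Sum>i\<in>I. c i * D i x)\<^sup>2) = (\<Sum>i\<in>I. (c i)\<^sup>2 * expectation (\<lambda>x. (D i x)\<^sup>2))"
proof -
  have cross: "integrable M (\<lambda>x. D i x * D j x) \<and> expectation (\<lambda>x. D i x * D j x) = 0"
    if ij: "i \<in> I" "j \<in> I" "i \<noteq> j" for i j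
  proof -
    have ind2: "indep_vars (\<lambda>_. borel) D {i, j}"
      by (rule indep_vars_subset[OF indep]) (use ij in auto)
    have int2: "\<And>k. k \<in> {i, j} \<Longrightarrow> integrable M (D k)"
      using int ij by auto
    have "integrable M (\<lambda>x. \<Prod>k\<in>{i, j}. D k x)"
      by (rule indep_vars_integrable[OF _ ind2 int2]) simp
    moreover have "expectation (\<lambda>x. \<Prod>k\<in>{i, j}. D k x) = (\<Prod>k\<in>{i, j}. expectation (D k))"
      by (rule indep_vars_lebesgue_integral[OF _ ind2 int2]) simp
    ultimately show ?thesis
      using centred ij by simp
  qed
  have pint: "integrable M (\<lambda>x. D i x * D j x)" if ij: "i \<in> I" "j \<in> I" for i j
  proof (cases "i = j")
    case True
    then show ?thesis using sq_int[OF ij(1)] by (simp add: power2_eq_square)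
  next
    case False
    then show ?thesis using cross[OF ij] by blast
  qed
  have pval: "expectation (\<lambda>x. D i x * D j x) = (if i = j then expectation (\<lambda>x. (D i x)\<^sup>2) else 0)"
    if ij: "i \<in> I" "j \<in> I" for i j
  proof (cases "i = j")
    case True
    then show ?thesis by (simp add: power2_eq_square)
  next
    case False
    then show ?thesis using cross[OF ij] by simp
  qed
  have sq: "(\<Sum>i\<in>I. c i * D i x)\<^sup>2 = (\<Sum>i\<in>I. \<Sum>j\<in>I. c i * c j * (D i x * D j x))" for x
    unfolding power2_eq_square sum_product
    by (intro sum.cong refl) (simp only: ac_simps)
  show "integrable M (\<lambda>x. (\<Sum>i\<in>I. c i * D i x)\<^sup>2)"
    unfolding sq by (intro Bochner_Integration.integrable_sum integrable_mult_right pint)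
  have "expectation (\<lambda>x. (\<Sum>i\<in>I. c i * D i x)\<^sup>2)
      = (\<Sum>i\<in>I. \<Sum>j\<in>I. c i * c j * expectation (\<lambda>x. D i x * D j x))"
    unfolding sq
    by (subst Bochner_Integration.integral_sum,
        (intro Bochner_Integration.integrable_sum integrable_mult_right pint; assumption),
        intro sum.cong refl,
        subst Bochner_Integration.integral_sum,
        (intro integrable_mult_right pint; assumption),
        intro sum.cong refl integral_mult_right_zero)
  also have "\<dots> = (\<Sum>i\<in>I. \<Sum>j\<in>I. if j = i then (c i)\<^sup>2 * expectation (\<lambda>x. (D i x)\<^sup>2) else 0)"
    by (intro sum.cong refl) (simp add: pval; simp add: power2_eq_square)
  also have "\<dots> = (\<Sum>i\<in>I. (c i)\<^sup>2 * expectation (\<lambda>x. (D i x)\<^sup>2))"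
    using I by simp
  finally show "expectation (\<lambda>x. (\<Sum>i\<in>I. c i * D i x)\<^sup>2) = (\<Sum>i\<in>I. (c i)\<^sup>2 * expectation (\<lambda>x. (D i x)\<^sup>2))" .
qed

section \<open>Counts of a Poisson random measure\<close>

locale poisson_rm =
  fixes M :: "'a measure" and nu :: "'b measure" and N :: "'a \<Rightarrow> 'b measure"
  assumes PRM: "poisson_random_measure M nu N"
begin

lemmas PRM_parts = PRM[unfolded poisson_random_measure_def]

sublocale prob_space M
  by (rule PRM_parts[THEN conjunct1])

lemma sets_N: "x \<in> space M \<Longrightarrow> sets (N x) = sets nu"
  by (rule PRM_parts[THEN conjunct2, THEN conjunct1, rule_format])

lemma space_N: "x \<in> space M \<Longrightarrow> space (N x) = space nu"
  by (rule sets_eq_imp_space_eq[OF sets_N])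

lemma measurable_N_cong:
  assumes "x \<in> space M" shows "f \<in> measurable (N x) K \<longleftrightarrow> f \<in> measurable nu K"
  by (simp add: measurable_cong_sets[OF sets_N[OF assms] refl])

lemma count_measurable: "B \<in> sets nu \<Longrightarrow> (\<lambda>x. emeasure (N x) B) \<in> borel_measurable M"
  by (rule PRM_parts[THEN conjunct2, THEN conjunct2, THEN conjunct1, rule_format])

lemma count_distribution:
  "B \<in> sets nu \<Longrightarrow> emeasure nu B < \<infinity> \<Longrightarrow>
     measure M {x\<in>space M. emeasure (N x) B = of_nat k} = poisson_weight (measure nu B) k"
  unfolding poisson_weight_def measure_def[of nu]
  by (rule PRM_parts[THEN conjunct2, THEN conjunct2, THEN conjunct2, THEN conjunct1, rule_format])

lemma count_infinite: "B \<in> sets nu \<Longrightarrow> emeasure nu B = \<infinity> \<Longrightarrow> AE x in M. emeasure (N x) B = \<infinity>"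
  by (rule PRM_parts[THEN conjunct2, THEN conjunct2, THEN conjunct2, THEN conjunct2, THEN conjunct1,
        rule_format])

lemma count_indep:
  fixes I :: "nat set"
  shows "finite I \<Longrightarrow> (\<And>i. i \<in> I \<Longrightarrow> B i \<in> sets nu) \<Longrightarrow> disjoint_family_on B I \<Longrightarrow>
    indep_vars (\<lambda>_. borel) (\<lambda>i x. emeasure (N x) (B i)) I"
  using PRM_parts[THEN conjunct2, THEN conjunct2, THEN conjunct2, THEN conjunct2, THEN conjunct2]
  by blast

lemma count_level_sets: "B \<in> sets nu \<Longrightarrow> {x\<in>space M. emeasure (N x) B = c} \<in> sets M"
  using measurable_sets[OF count_measurable, of B "{c}"] by (simp add: vimage_def Int_def conj_commute)

lemma count_AE_nat:
  assumes B: "B \<in> sets nu" "emeasure nu B < \<infinity>"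
  shows "AE x in M. \<exists>k::nat. emeasure (N x) B = of_nat k"
proof -
  define E where "E k = {x\<in>space M. emeasure (N x) B = of_nat k}" for k :: nat
  have E_sets: "E k \<in> sets M" for k
    unfolding E_def by (rule count_level_sets[OF B(1)])
  have "disjoint_family E"
    by (auto simp: disjoint_family_on_def E_def)
  then have "(\<lambda>k. prob (E k)) sums prob (\<Union>k. E k)"
    using E_sets by (intro measure_UNION) auto
  moreover have "prob (E k) = poisson_weight (measure nu B) k" for k
    unfolding E_def by (rule count_distribution[OF B])
  ultimately have "poisson_weight (measure nu B) sums prob (\<Union>k. E k)"
    by simp
  then have "prob (\<Union>k. E k) = 1"
    using poisson_weight_sums(1) sums_unique2 by blast
  then have "AE x in M. x \<in> (\<Union>k. E k)"
    by (rule AE_prob_1)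
  then show ?thesis
    by eventually_elim (auto simp: E_def)
qed

lemma count_nn_integral:
  assumes B: "B \<in> sets nu" "emeasure nu B < \<infinity>"
  shows "(\<integral>\<^sup>+ x. g (emeasure (N x) B) \<partial>M) = (\<Sum>k. g (of_nat k) * ennreal (poisson_weight (measure nu B) k))"
proof -
  define E where "E k = {x\<in>space M. emeasure (N x) B = of_nat k}" for k :: nat
  have E_sets: "E k \<in> sets M" for k
    unfolding E_def by (rule count_level_sets[OF B(1)])
  have "AE x in M. g (emeasure (N x) B) = (\<Sum>k. g (of_nat k) * indicator (E k) x)"
    using count_AE_nat[OF B] AE_space
  proof eventually_elim
    case (elim x)
    then obtain m :: nat where m: "emeasure (N x) B = of_nat m" by auto
    have "(\<lambda>k. g (of_nat k) * indicator (E k) x) = (\<lambda>k. if k = m then g (of_nat k) else 0)"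
      using elim m by (auto simp: E_def indicator_def)
    then show ?case
      using m sums_unique[OF sums_single[of m "\<lambda>k. g (of_nat k)"]] by simp
  qed
  then have "(\<integral>\<^sup>+ x. g (emeasure (N x) B) \<partial>M) = (\<integral>\<^sup>+ x. (\<Sum>k. g (of_nat k) * indicator (E k) x) \<partial>M)"
    by (rule nn_integral_cong_AE)
  also have "\<dots> = (\<Sum>k. g (of_nat k) * emeasure M (E k))"
    using E_sets by (simp add: nn_integral_suminf nn_integral_cmult_indicator)
  also have "\<dots> = (\<Sum>k. g (of_nat k) * ennreal (poisson_weight (measure nu B) k))"
    using E_sets by (simp add: emeasure_eq_measure E_def count_distribution[OF B])
  finally show ?thesis .
qed

lemma count_real_moment:
  assumes B: "B \<in> sets nu" "emeasure nu B < \<infinity>"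
    and h: "h \<in> borel_measurable borel" "\<And>k. 0 \<le> h (of_nat k)"
    and s: "(\<lambda>k. h (of_nat k) * poisson_weight (measure nu B) k) sums s"
  shows "integrable M (\<lambda>x. h (emeasure (N x) B))" and "(\<integral>x. h (emeasure (N x) B) \<partial>M) = s"
proof -
  let ?p = "poisson_weight (measure nu B)"
  have p_nonneg: "0 \<le> ?p k" for k by (simp add: poisson_weight_nonneg)
  have meas: "(\<lambda>x. h (emeasure (N x) B)) \<in> borel_measurable M"
    using measurable_compose[OF count_measurable[OF B(1)] h(1)] by (simp add: comp_def)
  have nonneg: "AE x in M. 0 \<le> h (emeasure (N x) B)"
    using count_AE_nat[OF B] by eventually_elim (use h(2) in auto)
  have s_nonneg: "0 \<le> s"
    using s h(2) p_nonneg by (auto simp: sums_iff intro!: suminf_nonneg)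
  have "(\<integral>\<^sup>+ x. ennreal (h (emeasure (N x) B)) \<partial>M) = (\<Sum>k. ennreal (h (of_nat k)) * ennreal (?p k))"
    by (rule count_nn_integral[OF B])
  also have "\<dots> = (\<Sum>k. ennreal (h (of_nat k) * ?p k))"
    using h(2) p_nonneg by (simp add: ennreal_mult)
  also have "\<dots> = ennreal s"
    using s h(2) p_nonneg by (simp add: suminf_ennreal2 sums_iff)
  finally have I: "(\<integral>\<^sup>+ x. ennreal (h (emeasure (N x) B)) \<partial>M) = ennreal s" .
  show int: "integrable M (\<lambda>x. h (emeasure (N x) B))"
    by (rule integrableI_nonneg[OF meas nonneg]) (simp add: I)
  show "(\<integral>x. h (emeasure (N x) B) \<partial>M) = s"
    using nn_integral_eq_integral[OF int nonneg] I s_nonneg integral_nonneg_AE[OF nonneg] by simp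
qed

lemma count_mean:
  assumes B: "B \<in> sets nu"
  shows "(\<integral>\<^sup>+ x. emeasure (N x) B \<partial>M) = emeasure nu B"
proof (cases "emeasure nu B < \<infinity>")
  case True
  let ?p = "poisson_weight (measure nu B)"
  have "(\<integral>\<^sup>+ x. emeasure (N x) B \<partial>M) = (\<Sum>k. of_nat k * ennreal (?p k))"
    using count_nn_integral[OF B True, of "\<lambda>y. y"] by simp
  also have "\<dots> = (\<Sum>k. ennreal (real k * ?p k))"
    by (simp add: ennreal_of_nat_eq_real_of_nat ennreal_mult poisson_weight_nonneg)
  also have "\<dots> = ennreal (measure nu B)"
    using poisson_weight_sums(2)[of "measure nu B"]
    by (simp add: suminf_ennreal2 sums_iff poisson_weight_nonneg)
  also have "\<dots> = emeasure nu B"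
    using True by (simp add: measure_def less_top[symmetric])
  finally show ?thesis .
next
  case False
  then have inf: "emeasure nu B = \<infinity>" by (simp add: not_less top_unique)
  have "(\<integral>\<^sup>+ x. emeasure (N x) B \<partial>M) = (\<integral>\<^sup>+ x. \<infinity> \<partial>M)"
    by (rule nn_integral_cong_AE[OF count_infinite[OF B inf]])
  then show ?thesis using inf by (simp add: emeasure_space_1)
qed

lemma centered_count_moments:
  assumes B: "B \<in> sets nu" "emeasure nu B < \<infinity>"
  shows "integrable M (\<lambda>x. measure (N x) B - measure nu B)"
    and "(\<integral>x. measure (N x) B - measure nu B \<partial>M) = 0"
    and "integrable M (\<lambda>x. (measure (N x) B - measure nu B)\<^sup>2)"
    and "(\<integral>x. (measure (N x) B - measure nu B)\<^sup>2 \<partial>M) = measure nu B"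
proof -
  have mean: "(\<lambda>k. enn2real (of_nat k :: ennreal) * poisson_weight (measure nu B) k) sums measure nu B"
    using poisson_weight_sums(2)[of "measure nu B"] by simp
  have int1: "integrable M (\<lambda>x. measure (N x) B)"
    and E1: "(\<integral>x. measure (N x) B \<partial>M) = measure nu B"
    unfolding measure_def[of "N _"]
    by (rule count_real_moment[OF B _ _ mean]; simp)+
  show "integrable M (\<lambda>x. measure (N x) B - measure nu B)"
    using int1 by simp
  show "(\<integral>x. measure (N x) B - measure nu B \<partial>M) = 0"
    using int1 E1 by (simp add: prob_space)
  let ?l = "measure nu B"
  have var: "(\<lambda>k. (enn2real (of_nat k :: ennreal) - ?l)\<^sup>2 * poisson_weight ?l k) sums ?l"
  proof -
    have "(\<lambda>k. (real k)\<^sup>2 * poisson_weight ?l k - 2 * ?l * (real k * poisson_weight ?l k)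
              + ?l\<^sup>2 * poisson_weight ?l k) sums ((?l + ?l\<^sup>2) - 2 * ?l * ?l + ?l\<^sup>2 * 1)"
      by (intro sums_add sums_diff sums_mult poisson_weight_sums)
    moreover have "(?l + ?l\<^sup>2) - 2 * ?l * ?l + ?l\<^sup>2 * 1 = ?l"
      by (simp add: power2_eq_square)
    ultimately show ?thesis
      by (simp add: power2_eq_square algebra_simps)
  qed
  show "integrable M (\<lambda>x. (measure (N x) B - measure nu B)\<^sup>2)"
    and "(\<integral>x. (measure (N x) B - measure nu B)\<^sup>2 \<partial>M) = measure nu B"
    unfolding measure_def[of "N _"]
    by (rule count_real_moment[where h = "\<lambda>y. (enn2real y - ?l)\<^sup>2", OF B _ _ var];
        simp)+
qed

text \<open>Isometry for step functions: compensated counts of disjoint sets are independent and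
  centred with variance nu(B), so the second moment of a linear combination is the weighted sum
  of the intensities.\<close>
lemma compensated_step_isometry:
  fixes c :: "nat \<Rightarrow> real"
  assumes I: "finite I" and dj: "disjoint_family_on B I"
    and B: "\<And>i. i \<in> I \<Longrightarrow> B i \<in> sets nu" "\<And>i. i \<in> I \<Longrightarrow> emeasure nu (B i) < \<infinity>"
  shows "(\<integral>\<^sup>+ x. ennreal ((\<Sum>i\<in>I. c i * (measure (N x) (B i) - measure nu (B i)))\<^sup>2) \<partial>M)
     = ennreal (\<Sum>i\<in>I. (c i)\<^sup>2 * measure nu (B i))"
proof -
  define D where "D i x = measure (N x) (B i) - measure nu (B i)" for i x
  have indep: "indep_vars (\<lambda>_. borel) D I"
  proof -
    have "indep_vars (\<lambda>_. borel)
        (\<lambda>i x. (\<lambda>y. enn2real y - measure nu (B i)) (emeasure (N x) (B i))) I"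
      by (rule indep_vars_compose2[OF count_indep[OF I B(1) dj]]) measurable
    then show ?thesis unfolding D_def measure_def .
  qed
  note moments = centered_count_moments[OF B(1) B(2), folded D_def]
  have "integrable M (\<lambda>x. (\<Sum>i\<in>I. c i * D i x)\<^sup>2)"
    and "(\<integral>x. (\<Sum>i\<in>I. c i * D i x)\<^sup>2 \<partial>M) = (\<Sum>i\<in>I. (c i)\<^sup>2 * measure nu (B i))"
    using indep_centered_sum_second_moment[OF I indep, of c] moments by simp_all
  then show ?thesis
    using nn_integral_eq_integral[of M "\<lambda>x. (\<Sum>i\<in>I. c i * D i x)\<^sup>2"] unfolding D_def by simp
qed

end

lemma step_function_apply:
  fixes c :: "'i \<Rightarrow> real" and F :: "real \<Rightarrow> real"
  assumes I: "finite I" and dj: "disjoint_family_on B I" and F0: "F 0 = 0"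
  shows "F (\<Sum>i\<in>I. c i * indicator (B i) z) = (\<Sum>i\<in>I. F (c i) * indicator (B i) z)"
proof (cases "\<exists>j\<in>I. z \<in> B j")
  case True
  then obtain j where j: "j \<in> I" "z \<in> B j" by blast
  have ind: "indicator (B i) z = (if i = j then 1 else 0 :: real)" if "i \<in> I" for i
    using dj j that by (auto simp: disjoint_family_on_def indicator_def)
  have "(\<Sum>i\<in>I. d i * indicator (B i) z) = d j" for d :: "'i \<Rightarrow> real"
  proof -
    have "(\<Sum>i\<in>I. d i * indicator (B i) z) = (\<Sum>i\<in>I. if i = j then d i else 0)"
      by (rule sum.cong) (auto simp: ind)
    then show ?thesis using I j by simp
  qed
  then show ?thesis by simp
next
  case False
  then have "\<And>i. i \<in> I \<Longrightarrow> indicator (B i) z = (0::real)" by (auto simp: indicator_def)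
  then show ?thesis using F0 by simp
qed

lemma step_function_integral:
  fixes c :: "'i \<Rightarrow> real"
  assumes I: "finite I"
    and B: "\<And>i. i \<in> I \<Longrightarrow> B i \<in> sets Q" "\<And>i. i \<in> I \<Longrightarrow> emeasure Q (B i) < \<infinity>"
  shows "integrable Q (\<lambda>z. \<Sum>i\<in>I. c i * indicator (B i) z)"
    and "(\<integral>z. (\<Sum>i\<in>I. c i * indicator (B i) z) \<partial>Q) = (\<Sum>i\<in>I. c i * measure Q (B i))"
proof -
  have int: "integrable Q (\<lambda>z. c i * indicator (B i) z)" if "i \<in> I" for i
    using B[OF that] by (intro integrable_mult_right integrable_real_indicator)
  then show "integrable Q (\<lambda>z. \<Sum>i\<in>I. c i * indicator (B i) z)"
    by (intro Bochner_Integration.integrable_sum)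
  have "(\<integral>z. (\<Sum>i\<in>I. c i * indicator (B i) z) \<partial>Q) = (\<Sum>i\<in>I. \<integral>z. c i * indicator (B i) z \<partial>Q)"
    by (rule Bochner_Integration.integral_sum) (rule int)
  also have "\<dots> = (\<Sum>i\<in>I. c i * measure Q (B i))"
    using B(1) by (intro sum.cong refl) (simp add: sets.Int_space_eq2)
  finally show "(\<integral>z. (\<Sum>i\<in>I. c i * indicator (B i) z) \<partial>Q) = (\<Sum>i\<in>I. c i * measure Q (B i))" .
qed

lemma step_function_nn_integral:
  fixes a :: "'i \<Rightarrow> real"
  assumes I: "finite I" and B: "\<And>i. i \<in> I \<Longrightarrow> B i \<in> sets Q" and a: "\<And>i. i \<in> I \<Longrightarrow> 0 \<le> a i"
  shows "(\<integral>\<^sup>+z. ennreal (\<Sum>i\<in>I. a i * indicator (B i) z) \<partial>Q) = (\<Sum>i\<in>I. ennreal (a i) * emeasure Q (B i))"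
proof -
  have "ennreal (\<Sum>i\<in>I. a i * indicator (B i) z) = (\<Sum>i\<in>I. ennreal (a i) * indicator (B i) z)" for z
    using a by (simp add: sum_ennreal[symmetric] ennreal_mult ennreal_indicator cong: sum.cong)
  then have "(\<integral>\<^sup>+z. ennreal (\<Sum>i\<in>I. a i * indicator (B i) z) \<partial>Q)
      = (\<Sum>i\<in>I. \<integral>\<^sup>+z. ennreal (a i) * indicator (B i) z \<partial>Q)"
    using B by (simp add: nn_integral_sum)
  also have "\<dots> = (\<Sum>i\<in>I. ennreal (a i) * emeasure Q (B i))"
    using B by (simp add: nn_integral_cmult_indicator)
  finally show ?thesis .
qed

lemma simple_function_step_representation:
  fixes s :: "'b \<Rightarrow> real"
  assumes s: "simple_function Q s" and fin: "(\<integral>\<^sup>+z. ennreal \<bar>s z\<bar> \<partial>Q) < \<infinity>"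
  obtains I :: "nat set" and B c where "finite I" "disjoint_family_on B I"
    "\<And>i. i \<in> I \<Longrightarrow> B i \<in> sets Q" "\<And>i. i \<in> I \<Longrightarrow> emeasure Q (B i) < \<infinity>"
    "\<And>z. z \<in> space Q \<Longrightarrow> s z = (\<Sum>i\<in>I. c i * indicator (B i) z)"
proof -
  define V where "V = s ` space Q - {0}"
  have fV: "finite V" using simple_functionD(1)[OF s] unfolding V_def by simp
  obtain e where e: "bij_betw e {0..<card V} V" using ex_bij_betw_nat_finite[OF fV] by blast
  define B where "B i = s -` {e i} \<inter> space Q" for i
  have B_sets: "B i \<in> sets Q" for i unfolding B_def by (rule simple_functionD(2)[OF s])
  have eV: "e i \<in> V" if "i \<in> {0..<card V}" for i using e that by (auto simp: bij_betw_def)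
  have einj: "inj_on e {0..<card V}" using e by (simp add: bij_betw_def)
  have ne: "e i \<noteq> 0" if "i \<in> {0..<card V}" for i using eV[OF that] by (simp add: V_def)
  have dj: "disjoint_family_on B {0..<card V}"
    unfolding disjoint_family_on_def B_def using einj by (auto simp: inj_on_def)
  have fin_B: "emeasure Q (B i) < \<infinity>" if i: "i \<in> {0..<card V}" for i
  proof -
    have "ennreal \<bar>e i\<bar> * emeasure Q (B i) = (\<integral>\<^sup>+z. ennreal \<bar>e i\<bar> * indicator (B i) z \<partial>Q)"
      by (rule nn_integral_cmult_indicator[OF B_sets, symmetric])
    also have "\<dots> \<le> (\<integral>\<^sup>+z. ennreal \<bar>s z\<bar> \<partial>Q)"
      by (rule nn_integral_mono) (auto simp: B_def indicator_def)
    finally have "ennreal \<bar>e i\<bar> * emeasure Q (B i) < \<infinity>"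
      using fin by (rule le_less_trans)
    then show ?thesis
      using ne[OF i] by (auto simp: ennreal_mult_less_top)
  qed
  have rep: "s z = (\<Sum>i\<in>{0..<card V}. e i * indicator (B i) z)" if z: "z \<in> space Q" for z
  proof (cases "s z = 0")
    case True
    then show ?thesis
      using ne by (auto simp: B_def indicator_def intro!: sum.neutral)
  next
    case False
    then obtain j where j: "j \<in> {0..<card V}" "e j = s z"
      using e z by (metis V_def DiffI bij_betw_def imageE imageI singletonD)
    have single: "e i * indicator (B i) z = (if i = j then e i else 0)" if "i \<in> {0..<card V}" for i
      using j einj z that by (auto simp: B_def indicator_def inj_on_def)
    have "(\<Sum>i\<in>{0..<card V}. e i * indicator (B i) z) = (\<Sum>i\<in>{0..<card V}. if i = j then e i else 0)"
      by (rule sum.cong[OF refl]) (rule single)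
    then show ?thesis
      using j by simp
  qed
  show ?thesis
    using that[of "{0..<card V}" B e] dj B_sets fin_B rep by simp
qed

section \<open>Pathwise integrals against a Poisson random measure\<close>

context poisson_rm
begin

text \<open>Campbell's formula for nonnegative simple integrands: integrate the counts of the level sets.\<close>
lemma campbell_simple:
  fixes g :: "'b \<Rightarrow> ennreal"
  assumes g: "simple_function nu g"
  shows "(\<lambda>x. \<integral>\<^sup>+z. g z \<partial>N x) \<in> borel_measurable M"
    and "(\<integral>\<^sup>+x. (\<integral>\<^sup>+z. g z \<partial>N x) \<partial>M) = (\<integral>\<^sup>+z. g z \<partial>nu)"
proof -
  let ?V = "g ` space nu"
  let ?B = "\<lambda>v. g -` {v} \<inter> space nu"
  have B_sets: "?B v \<in> sets nu" for v
    by (rule simple_functionD(2)[OF g])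
  have rep: "(\<integral>\<^sup>+z. g z \<partial>N x) = (\<Sum>v\<in>?V. v * emeasure (N x) (?B v))" if x: "x \<in> space M" for x
  proof -
    have "simple_function (N x) g"
      using g by (simp add: simple_function_def space_N[OF x] sets_N[OF x])
    then show ?thesis
      by (simp add: nn_integral_eq_simple_integral simple_integral_def space_N[OF x])
  qed
  have [measurable]: "(\<lambda>x. emeasure (N x) (?B v)) \<in> borel_measurable M" for v
    by (rule count_measurable[OF B_sets])
  show "(\<lambda>x. \<integral>\<^sup>+z. g z \<partial>N x) \<in> borel_measurable M"
    by (subst measurable_cong[OF rep]) measurable
  have "(\<integral>\<^sup>+x. (\<integral>\<^sup>+z. g z \<partial>N x) \<partial>M) = (\<integral>\<^sup>+x. (\<Sum>v\<in>?V. v * emeasure (N x) (?B v)) \<partial>M)"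
    by (rule nn_integral_cong) (simp add: rep)
  also have "\<dots> = (\<Sum>v\<in>?V. v * emeasure nu (?B v))"
    by (simp add: nn_integral_sum nn_integral_cmult count_mean B_sets)
  also have "\<dots> = (\<integral>\<^sup>+z. g z \<partial>nu)"
    by (simp add: nn_integral_eq_simple_integral[OF g] simple_integral_def)
  finally show "(\<integral>\<^sup>+x. (\<integral>\<^sup>+z. g z \<partial>N x) \<partial>M) = (\<integral>\<^sup>+z. g z \<partial>nu)" .
qed

text \<open>Campbell's formula E (\<integral> g dN) = \<integral> g d\<nu>, by monotone approximation with simple functions;
  in particular the pathwise integral is a random variable.\<close>
lemma campbell:
  fixes g :: "'b \<Rightarrow> ennreal"
  assumes g: "g \<in> borel_measurable nu"
  shows "(\<lambda>x. \<integral>\<^sup>+z. g z \<partial>N x) \<in> borel_measurable M"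
    and "(\<integral>\<^sup>+x. (\<integral>\<^sup>+z. g z \<partial>N x) \<partial>M) = (\<integral>\<^sup>+z. g z \<partial>nu)"
proof -
  obtain f where f: "\<And>i. simple_function nu (f i)" "incseq f" "\<And>z. (SUP i. f i z) = g z"
    using borel_measurable_implies_simple_function_sequence'[OF g] by metis
  have f_meas: "f i \<in> borel_measurable nu" for i
    by (rule borel_measurable_simple_function[OF f(1)])
  have g_eq: "g = (\<lambda>z. SUP i. f i z)"
    using f(3) by auto
  have SUP_N: "(\<integral>\<^sup>+z. g z \<partial>N x) = (SUP i. \<integral>\<^sup>+z. f i z \<partial>N x)" if x: "x \<in> space M" for x
    unfolding g_eq by (rule nn_integral_monotone_convergence_SUP[OF f(2)])
      (simp add: measurable_N_cong[OF x] f_meas)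
  note simple = campbell_simple[OF f(1)]
  have "(\<lambda>x. SUP i. \<integral>\<^sup>+z. f i z \<partial>N x) \<in> borel_measurable M"
    by (rule borel_measurable_SUP) (simp_all add: simple(1))
  then show "(\<lambda>x. \<integral>\<^sup>+z. g z \<partial>N x) \<in> borel_measurable M"
    by (rule measurable_cong[THEN iffD2, rotated]) (simp add: SUP_N)
  have mono: "incseq (\<lambda>i x. \<integral>\<^sup>+z. f i z \<partial>N x)"
    using f(2) by (auto simp: incseq_def le_fun_def intro!: nn_integral_mono)
  have "(\<integral>\<^sup>+x. (\<integral>\<^sup>+z. g z \<partial>N x) \<partial>M) = (\<integral>\<^sup>+x. (SUP i. \<integral>\<^sup>+z. f i z \<partial>N x) \<partial>M)"
    by (rule nn_integral_cong) (simp add: SUP_N)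
  also have "\<dots> = (SUP i. \<integral>\<^sup>+x. (\<integral>\<^sup>+z. f i z \<partial>N x) \<partial>M)"
    by (rule nn_integral_monotone_convergence_SUP[OF mono simple(1)])
  also have "\<dots> = (SUP i. \<integral>\<^sup>+z. f i z \<partial>nu)"
    by (simp add: simple(2))
  also have "\<dots> = (\<integral>\<^sup>+z. g z \<partial>nu)"
    unfolding g_eq by (rule nn_integral_monotone_convergence_SUP[OF f(2) f_meas, symmetric])
  finally show "(\<integral>\<^sup>+x. (\<integral>\<^sup>+z. g z \<partial>N x) \<partial>M) = (\<integral>\<^sup>+z. g z \<partial>nu)" .
qed

lemma integrable_N_AE:
  fixes h :: "'b \<Rightarrow> real"
  assumes h: "h \<in> borel_measurable nu" "(\<integral>\<^sup>+z. ennreal \<bar>h z\<bar> \<partial>nu) < \<infinity>"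
  shows "AE x in M. integrable (N x) h"
proof -
  have abs_meas: "(\<lambda>z. ennreal \<bar>h z\<bar>) \<in> borel_measurable nu"
    using h(1) by measurable
  have "(\<integral>\<^sup>+x. (\<integral>\<^sup>+z. ennreal \<bar>h z\<bar> \<partial>N x) \<partial>M) \<noteq> \<infinity>"
    using h(2) by (simp add: campbell(2)[OF abs_meas])
  then have "AE x in M. (\<integral>\<^sup>+z. ennreal \<bar>h z\<bar> \<partial>N x) \<noteq> \<infinity>"
    by (intro nn_integral_PInf_AE campbell(1)[OF abs_meas])
  then show ?thesis
    using AE_space
    by eventually_elim (auto intro!: integrableI_bounded simp: measurable_N_cong h(1) less_top)
qed

lemma integral_N_measurable:
  fixes f :: "'b \<Rightarrow> real"
  assumes f: "f \<in> borel_measurable nu"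
  shows "(\<lambda>x. \<integral>z. f z \<partial>N x) \<in> borel_measurable M"
proof -
  define P where "P x = (\<integral>\<^sup>+z. ennreal (f z) \<partial>N x)" for x
  define Q where "Q x = (\<integral>\<^sup>+z. ennreal (- f z) \<partial>N x)" for x
  have eq: "(\<integral>z. f z \<partial>N x) = (if P x \<noteq> \<infinity> \<and> Q x \<noteq> \<infinity> then enn2real (P x) - enn2real (Q x) else 0)"
    if x: "x \<in> space M" for x
  proof -
    have "f \<in> borel_measurable (N x)"
      using f by (simp add: measurable_N_cong[OF x])
    then show ?thesis
      unfolding P_def Q_def
      using real_integrable_def[of "N x" f] real_lebesgue_integral_def[of "N x" f]
        not_integrable_integral_eq[of "N x" f]
      by auto
  qed
  have [measurable]: "P \<in> borel_measurable M" "Q \<in> borel_measurable M"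
    unfolding P_def Q_def using f by (intro campbell(1); measurable)+
  show ?thesis
    by (subst measurable_cong[OF eq]) measurable
qed

lemma compensated_simple_isometry:
  fixes F :: "'b \<Rightarrow> real"
  assumes F: "simple_function nu F" "(\<integral>\<^sup>+z. ennreal \<bar>F z\<bar> \<partial>nu) < \<infinity>"
  shows "(\<integral>\<^sup>+x. ennreal (((\<integral>z. F z \<partial>N x) - (\<integral>z. F z \<partial>nu))\<^sup>2) \<partial>M) = (\<integral>\<^sup>+z. ennreal ((F z)\<^sup>2) \<partial>nu)"
proof -
  obtain I :: "nat set" and B c where I: "finite I" and dj: "disjoint_family_on B I"
    and B: "\<And>i. i \<in> I \<Longrightarrow> B i \<in> sets nu" "\<And>i. i \<in> I \<Longrightarrow> emeasure nu (B i) < \<infinity>"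
    and rep: "\<And>z. z \<in> space nu \<Longrightarrow> F z = (\<Sum>i\<in>I. c i * indicator (B i) z)"
    using simple_function_step_representation[OF F] by metis
  have int_nu: "(\<integral>z. F z \<partial>nu) = (\<Sum>i\<in>I. c i * measure nu (B i))"
    using step_function_integral(2)[OF I B] by (simp add: rep cong: Bochner_Integration.integral_cong)
  have "AE x in M. \<forall>i\<in>I. \<exists>k::nat. emeasure (N x) (B i) = of_nat k"
    using I by (intro AE_finite_allI count_AE_nat B)
  then have int_N: "AE x in M. (\<integral>z. F z \<partial>N x) = (\<Sum>i\<in>I. c i * measure (N x) (B i))"
    using AE_space
  proof eventually_elim
    case (elim x)
    have fin: "emeasure (N x) (B i) < \<infinity>" if "i \<in> I" for i
      using elim(1) that by (metis of_nat_less_top infinity_ennreal_def)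
    have sets: "B i \<in> sets (N x)" if "i \<in> I" for i
      using B(1)[OF that] sets_N[OF elim(2)] by simp
    have "(\<integral>z. F z \<partial>N x) = (\<integral>z. (\<Sum>i\<in>I. c i * indicator (B i) z) \<partial>N x)"
      by (rule Bochner_Integration.integral_cong) (simp_all add: rep space_N[OF elim(2)])
    also have "\<dots> = (\<Sum>i\<in>I. c i * measure (N x) (B i))"
      by (rule step_function_integral(2)[OF I sets fin])
    finally show ?case .
  qed
  have "(\<integral>\<^sup>+x. ennreal (((\<integral>z. F z \<partial>N x) - (\<integral>z. F z \<partial>nu))\<^sup>2) \<partial>M)
      = (\<integral>\<^sup>+x. ennreal ((\<Sum>i\<in>I. c i * (measure (N x) (B i) - measure nu (B i)))\<^sup>2) \<partial>M)"
    by (rule nn_integral_cong_AE, use int_N in eventually_elim)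
      (simp add: int_nu sum_subtractf right_diff_distrib)
  also have "\<dots> = ennreal (\<Sum>i\<in>I. (c i)\<^sup>2 * measure nu (B i))"
    by (rule compensated_step_isometry[OF I dj B])
  also have "\<dots> = (\<Sum>i\<in>I. ennreal ((c i)\<^sup>2 * measure nu (B i)))"
    by (rule sum_ennreal[symmetric]) simp
  also have "\<dots> = (\<Sum>i\<in>I. ennreal ((c i)\<^sup>2) * emeasure nu (B i))"
  proof (intro sum.cong refl)
    fix i assume "i \<in> I"
    then have "emeasure nu (B i) = ennreal (measure nu (B i))"
      using B(2)[of i] by (intro emeasure_eq_ennreal_measure) auto
    then show "ennreal ((c i)\<^sup>2 * measure nu (B i)) = ennreal ((c i)\<^sup>2) * emeasure nu (B i)"
      by (simp add: ennreal_mult)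
  qed
  also have "\<dots> = (\<integral>\<^sup>+z. ennreal (\<Sum>i\<in>I. (c i)\<^sup>2 * indicator (B i) z) \<partial>nu)"
    by (rule step_function_nn_integral[OF I B(1), symmetric]) simp_all
  also have "\<dots> = (\<integral>\<^sup>+z. ennreal ((F z)\<^sup>2) \<partial>nu)"
    by (rule nn_integral_cong) (simp add: rep step_function_apply[OF I dj, of "\<lambda>y. y\<^sup>2"])
  finally show ?thesis .
qed

lemma compensated_integral_dominated_convergence:
  fixes F :: "nat \<Rightarrow> 'b \<Rightarrow> real" and h w :: "'b \<Rightarrow> real"
  assumes F_meas: "\<And>i. F i \<in> borel_measurable nu" and h: "h \<in> borel_measurable nu"
    and lim: "\<And>z. z \<in> space nu \<Longrightarrow> (\<lambda>i. F i z) \<longlonglongrightarrow> h z"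
    and dom: "\<And>i z. z \<in> space nu \<Longrightarrow> \<bar>F i z\<bar> \<le> w z"
    and w: "integrable nu w"
  shows "AE x in M. (\<lambda>i. (\<integral>z. F i z \<partial>N x) - (\<integral>z. F i z \<partial>nu))
    \<longlonglongrightarrow> (\<integral>z. h z \<partial>N x) - (\<integral>z. h z \<partial>nu)"
proof -
  have lim_nu: "(\<lambda>i. \<integral>z. F i z \<partial>nu) \<longlonglongrightarrow> (\<integral>z. h z \<partial>nu)"
    by (rule integral_dominated_convergence[OF h F_meas w]) (use lim dom in \<open>auto intro!: AE_I2\<close>)
  have "(\<integral>\<^sup>+z. ennreal \<bar>w z\<bar> \<partial>nu) < \<infinity>"
    using w by (simp add: integrable_iff_bounded)
  then have "AE x in M. integrable (N x) w"
    using w by (intro integrable_N_AE) auto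
  then show ?thesis
    using AE_space
  proof eventually_elim
    case (elim x)
    have "(\<lambda>i. \<integral>z. F i z \<partial>N x) \<longlonglongrightarrow> (\<integral>z. h z \<partial>N x)"
      by (rule integral_dominated_convergence[OF _ _ elim(1)])
        (use lim dom h F_meas in \<open>auto simp: measurable_N_cong[OF elim(2)] space_N[OF elim(2)] intro!: AE_I2\<close>)
    then show ?case
      by (intro tendsto_diff lim_nu)
  qed
qed

text \<open>The L2 bound for integrands in L1(\<nu>), obtained from the simple case by dominated
  convergence on each path and Fatou's lemma in the sample space.\<close>
lemma compensated_integral_L2_bound:
  fixes h :: "'b \<Rightarrow> real"
  assumes h: "h \<in> borel_measurable nu" "(\<integral>\<^sup>+z. ennreal \<bar>h z\<bar> \<partial>nu) < \<infinity>"
  shows "(\<integral>\<^sup>+x. ennreal (((\<integral>z. h z \<partial>N x) - (\<integral>z. h z \<partial>nu))\<^sup>2) \<partial>M)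
    \<le> 4 * (\<integral>\<^sup>+z. ennreal ((h z)\<^sup>2) \<partial>nu)"
proof -
  obtain F where F_seq: "\<forall>i. simple_function nu (F i)" "\<forall>z\<in>space nu. (\<lambda>i. F i z) \<longlonglongrightarrow> h z"
    "\<forall>i. \<forall>z\<in>space nu. dist (F i z) 0 \<le> 2 * dist (h z) 0"
    using borel_measurable_implies_sequence_metric[OF h(1), of 0] by blast
  have F: "\<And>i. simple_function nu (F i)"
    "\<And>z. z \<in> space nu \<Longrightarrow> (\<lambda>i. F i z) \<longlonglongrightarrow> h z"
    "\<And>i z. z \<in> space nu \<Longrightarrow> \<bar>F i z\<bar> \<le> 2 * \<bar>h z\<bar>"
    using F_seq by (auto simp: dist_real_def)
  have F_meas: "F i \<in> borel_measurable nu" for i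
    by (rule borel_measurable_simple_function[OF F(1)])
  have dom_int: "integrable nu (\<lambda>z. 2 * \<bar>h z\<bar>)"
    using h by (intro integrable_mult_right integrable_abs integrableI_bounded) auto
  have F_L1: "(\<integral>\<^sup>+z. ennreal \<bar>F i z\<bar> \<partial>nu) < \<infinity>" for i
  proof -
    have "integrable nu (F i)"
      by (rule Bochner_Integration.integrable_bound[OF dom_int F_meas]) (use F(3) in \<open>auto intro!: AE_I2\<close>)
    then show ?thesis
      by (simp add: integrable_iff_bounded)
  qed
  have conv: "AE x in M. (\<lambda>i. ennreal (((\<integral>z. F i z \<partial>N x) - (\<integral>z. F i z \<partial>nu))\<^sup>2))
      \<longlonglongrightarrow> ennreal (((\<integral>z. h z \<partial>N x) - (\<integral>z. h z \<partial>nu))\<^sup>2)"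
  proof -
    have "AE x in M. (\<lambda>i. (\<integral>z. F i z \<partial>N x) - (\<integral>z. F i z \<partial>nu))
        \<longlonglongrightarrow> (\<integral>z. h z \<partial>N x) - (\<integral>z. h z \<partial>nu)"
      by (rule compensated_integral_dominated_convergence[OF F_meas h(1) _ _ dom_int]) (use F in auto)
    then show ?thesis
      by eventually_elim (intro tendsto_ennrealI tendsto_power)
  qed
  have "(\<integral>\<^sup>+x. ennreal (((\<integral>z. h z \<partial>N x) - (\<integral>z. h z \<partial>nu))\<^sup>2) \<partial>M)
      = (\<integral>\<^sup>+x. liminf (\<lambda>i. ennreal (((\<integral>z. F i z \<partial>N x) - (\<integral>z. F i z \<partial>nu))\<^sup>2)) \<partial>M)"
    by (rule nn_integral_cong_AE, use conv in eventually_elim)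
      (rule lim_imp_Liminf[symmetric], simp, assumption)
  also have "\<dots> \<le> liminf (\<lambda>i. \<integral>\<^sup>+x. ennreal (((\<integral>z. F i z \<partial>N x) - (\<integral>z. F i z \<partial>nu))\<^sup>2) \<partial>M)"
    by (rule nn_integral_liminf) (use integral_N_measurable[OF F_meas] in measurable)
  also have "\<dots> = liminf (\<lambda>i. \<integral>\<^sup>+z. ennreal ((F i z)\<^sup>2) \<partial>nu)"
    by (simp add: compensated_simple_isometry[OF F(1) F_L1])
  also have "\<dots> \<le> liminf (\<lambda>i. 4 * (\<integral>\<^sup>+z. ennreal ((h z)\<^sup>2) \<partial>nu))"
  proof (intro Liminf_mono always_eventually allI)
    fix i
    have sq_bound: "(F i z)\<^sup>2 \<le> 4 * (h z)\<^sup>2" if "z \<in> space nu" for z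
    proof -
      have "(F i z)\<^sup>2 \<le> (2 * \<bar>h z\<bar>)\<^sup>2"
        using F(3)[OF that] by (metis abs_ge_zero power_mono power2_abs)
      then show ?thesis by (simp add: power_mult_distrib)
    qed
    have "(\<integral>\<^sup>+z. ennreal ((F i z)\<^sup>2) \<partial>nu) \<le> (\<integral>\<^sup>+z. 4 * ennreal ((h z)\<^sup>2) \<partial>nu)"
    proof (rule nn_integral_mono)
      fix z assume "z \<in> space nu"
      then have "ennreal ((F i z)\<^sup>2) \<le> ennreal (4 * (h z)\<^sup>2)"
        by (intro ennreal_leI sq_bound)
      then show "ennreal ((F i z)\<^sup>2) \<le> 4 * ennreal ((h z)\<^sup>2)"
        by (simp add: ennreal_mult)
    qed
    then show "(\<integral>\<^sup>+z. ennreal ((F i z)\<^sup>2) \<partial>nu) \<le> 4 * (\<integral>\<^sup>+z. ennreal ((h z)\<^sup>2) \<partial>nu)"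
      using h(1) by (simp add: nn_integral_cmult)
  qed
  also have "\<dots> = 4 * (\<integral>\<^sup>+z. ennreal ((h z)\<^sup>2) \<partial>nu)"
    by (rule Liminf_const) simp
  finally show ?thesis .
qed

end

section \<open>Compensated Poisson integrals are Lipschitz in L2\<close>

lemma square_sum3_le: "(a - b + c)\<^sup>2 \<le> 3 * a\<^sup>2 + 3 * b\<^sup>2 + 3 * (c::real)\<^sup>2"
proof -
  have "(a - b + c)\<^sup>2 + ((a + b)\<^sup>2 + (a - c)\<^sup>2 + (b + c)\<^sup>2) = 3 * a\<^sup>2 + 3 * b\<^sup>2 + 3 * c\<^sup>2"
    by (simp add: power2_eq_square algebra_simps)
  moreover have "0 \<le> (a + b)\<^sup>2 + (a - c)\<^sup>2 + (b + c)\<^sup>2" by simp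
  ultimately show ?thesis by linarith
qed

lemma nn_integral_square_split3:
  fixes D a b c :: "'a \<Rightarrow> real"
  assumes decomp: "AE x in M. D x = a x - b x + c x"
    and meas: "a \<in> borel_measurable M" "b \<in> borel_measurable M" "c \<in> borel_measurable M"
  shows "(\<integral>\<^sup>+x. ennreal ((D x)\<^sup>2) \<partial>M)
    \<le> 3 * (\<integral>\<^sup>+x. ennreal ((a x)\<^sup>2) \<partial>M) + 3 * (\<integral>\<^sup>+x. ennreal ((b x)\<^sup>2) \<partial>M)
      + 3 * (\<integral>\<^sup>+x. ennreal ((c x)\<^sup>2) \<partial>M)"
proof -
  have "AE x in M. ennreal ((D x)\<^sup>2)
      \<le> 3 * ennreal ((a x)\<^sup>2) + 3 * ennreal ((b x)\<^sup>2) + 3 * ennreal ((c x)\<^sup>2)"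
    using decomp
  proof eventually_elim
    case (elim x)
    then have "ennreal ((D x)\<^sup>2) \<le> ennreal (3 * (a x)\<^sup>2 + 3 * (b x)\<^sup>2 + 3 * (c x)\<^sup>2)"
      using square_sum3_le by (intro ennreal_leI) simp
    then show ?case
      by (simp add: ennreal_plus ennreal_mult)
  qed
  then have "(\<integral>\<^sup>+x. ennreal ((D x)\<^sup>2) \<partial>M)
      \<le> (\<integral>\<^sup>+x. 3 * ennreal ((a x)\<^sup>2) + 3 * ennreal ((b x)\<^sup>2) + 3 * ennreal ((c x)\<^sup>2) \<partial>M)"
    by (rule nn_integral_mono_AE)
  also have "\<dots> = 3 * (\<integral>\<^sup>+x. ennreal ((a x)\<^sup>2) \<partial>M) + 3 * (\<integral>\<^sup>+x. ennreal ((b x)\<^sup>2) \<partial>M)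
      + 3 * (\<integral>\<^sup>+x. ennreal ((c x)\<^sup>2) \<partial>M)"
    using meas by (simp add: nn_integral_add nn_integral_cmult)
  finally show ?thesis .
qed

text \<open>An L2 function restricted to a set of finite measure is in L1, since
  |u| 1_B is at most 1_B + u squared.\<close>
lemma L2_restrict_L1:
  fixes u :: "'b \<Rightarrow> real"
  assumes u: "u \<in> borel_measurable Q" "(\<integral>\<^sup>+z. ennreal ((u z)\<^sup>2) \<partial>Q) < \<infinity>"
    and B: "B \<in> sets Q" "emeasure Q B < \<infinity>"
  shows "(\<integral>\<^sup>+z. ennreal \<bar>u z * indicator B z\<bar> \<partial>Q) < \<infinity>"
proof -
  have pointwise: "\<bar>u z * indicator B z\<bar> \<le> indicator B z + (u z)\<^sup>2" for z
  proof -
    have "\<bar>u z\<bar> \<le> 1 + (u z)\<^sup>2"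
    proof (cases "\<bar>u z\<bar> \<le> 1")
      case True
      then show ?thesis by (simp add: add_increasing2)
    next
      case False
      then have "\<bar>u z\<bar> * 1 \<le> \<bar>u z\<bar> * \<bar>u z\<bar>" by (intro mult_left_mono) auto
      then show ?thesis by (simp add: power2_eq_square)
    qed
    then show ?thesis
      by (cases "z \<in> B") auto
  qed
  have "(\<integral>\<^sup>+z. ennreal \<bar>u z * indicator B z\<bar> \<partial>Q) \<le> (\<integral>\<^sup>+z. indicator B z + ennreal ((u z)\<^sup>2) \<partial>Q)"
  proof (rule nn_integral_mono)
    fix z
    have "ennreal \<bar>u z * indicator B z\<bar> \<le> ennreal (indicator B z + (u z)\<^sup>2)"
      by (rule ennreal_leI[OF pointwise])
    also have "\<dots> = indicator B z + ennreal ((u z)\<^sup>2)"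
      by (subst ennreal_plus) (auto simp: indicator_def)
    finally show "ennreal \<bar>u z * indicator B z\<bar> \<le> indicator B z + ennreal ((u z)\<^sup>2)" .
  qed
  also have "\<dots> = emeasure Q B + (\<integral>\<^sup>+z. ennreal ((u z)\<^sup>2) \<partial>Q)"
    using u(1) B(1) by (simp add: nn_integral_add)
  also have "\<dots> < \<infinity>"
    using B(2) u(2) by (simp add: less_top)
  finally show ?thesis .
qed

lemma L2_truncation_tendsto:
  fixes u :: "'b \<Rightarrow> real"
  assumes u: "u \<in> borel_measurable Q" "(\<integral>\<^sup>+z. ennreal ((u z)\<^sup>2) \<partial>Q) < \<infinity>"
    and A: "range A \<subseteq> sets Q" "(\<Union>i. A i) = space Q" "incseq A"
  shows "(\<lambda>n. \<integral>\<^sup>+z. ennreal ((u z - u z * indicator (A n) z)\<^sup>2) \<partial>Q) \<longlonglongrightarrow> 0"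
proof -
  define T where "T n z = ennreal ((u z - u z * indicator (A n) z)\<^sup>2)" for n z
  have T_meas: "T n \<in> borel_measurable Q" for n
    unfolding T_def using u(1) A(1) by measurable
  have T_step: "T (Suc n) z \<le> T n z" for n z
    using A(3) by (cases "z \<in> A (Suc n)"; cases "z \<in> A n")
      (auto simp: T_def indicator_def incseq_Suc_iff)
  then have T_dec: "decseq T"
    by (intro decseq_SucI le_funI)
  have T_le: "T n z \<le> ennreal ((u z)\<^sup>2)" for n z
    by (auto simp: T_def indicator_def)
  have T_fin: "(\<integral>\<^sup>+z. T n z \<partial>Q) < \<infinity>" for n
    using nn_integral_mono[of Q "T n", OF T_le] u(2) by (rule le_less_trans)
  have T_INF: "(INF n. T n z) = 0" if z: "z \<in> space Q" for z
  proof -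
    from z A(2) obtain m where "z \<in> A m" by blast
    then have "T m z = 0" by (simp add: T_def)
    then show ?thesis by (metis INF_lower2 UNIV_I le_zero_eq)
  qed
  have "(INF n. \<integral>\<^sup>+z. T n z \<partial>Q) = (\<integral>\<^sup>+z. (INF n. T n z) \<partial>Q)"
    by (rule nn_integral_monotone_convergence_INF_decseq[OF T_dec T_meas T_fin, symmetric])
  also have "\<dots> = 0"
    by (simp add: T_INF nn_integral_cong[of Q _ "\<lambda>_. 0"])
  finally have "(INF n. \<integral>\<^sup>+z. T n z \<partial>Q) = 0" .
  moreover have "decseq (\<lambda>n. \<integral>\<^sup>+z. T n z \<partial>Q)"
    by (intro decseq_SucI nn_integral_mono T_step)
  ultimately show ?thesis
    unfolding T_def[symmetric] using LIMSEQ_INF by metis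
qed

context poisson_rm
begin

lemma compensated_poisson_integral_tendsto:
  assumes Y: "compensated_poisson_integral M nu N f Y"
    and A: "range A \<subseteq> sets nu" "(\<Union>i. A i) = space nu" "incseq A" "\<And>n. emeasure nu (A n) < \<infinity>"
  shows "(\<lambda>n. \<integral>\<^sup>+x. ennreal ((Y x - ((\<integral>z. f z * indicator (A n) z \<partial>N x)
                                    - (\<integral>z. f z * indicator (A n) z \<partial>nu)))\<^sup>2) \<partial>M) \<longlonglongrightarrow> 0"
proof -
  have f: "f \<in> borel_measurable nu" "(\<integral>\<^sup>+z. ennreal ((f z)\<^sup>2) \<partial>nu) < \<infinity>"
    using Y unfolding compensated_poisson_integral_def by blast+
  show ?thesis
    using Y L2_truncation_tendsto[OF f A(1-3)] A(1,4)
    unfolding compensated_poisson_integral_def by blast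
qed

lemma L2_truncation_integrable:
  fixes u :: "'b \<Rightarrow> real"
  assumes u: "u \<in> borel_measurable nu" "(\<integral>\<^sup>+z. ennreal ((u z)\<^sup>2) \<partial>nu) < \<infinity>"
    and A: "A \<in> sets nu" "emeasure nu A < \<infinity>"
  shows "integrable nu (\<lambda>z. u z * indicator A z)"
    and "AE x in M. integrable (N x) (\<lambda>z. u z * indicator A z)"
  using L2_restrict_L1[OF u A] u(1) A(1) by (auto intro!: integrableI_bounded integrable_N_AE)

text \<open>The compensated integral depends 12-Lipschitz on the integrand in mean square:
  compare both integrals with the compensated pathwise integrals of truncations and use the
  L2 bound for the truncated difference.\<close>
lemma compensated_poisson_integral_L2_lipschitz:
  assumes sf: "sigma_finite_measure nu"
    and Y: "compensated_poisson_integral M nu N f Y"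
    and Z: "compensated_poisson_integral M nu N g Z"
  shows "(\<integral>\<^sup>+x. ennreal ((Y x - Z x)\<^sup>2) \<partial>M) \<le> 12 * (\<integral>\<^sup>+z. ennreal ((f z - g z)\<^sup>2) \<partial>nu)"
proof (cases "(\<integral>\<^sup>+z. ennreal ((f z - g z)\<^sup>2) \<partial>nu) = \<infinity>")
  case True
  then show ?thesis by (simp add: ennreal_mult_top)
next
  case False
  define K where "K = (\<integral>\<^sup>+z. ennreal ((f z - g z)\<^sup>2) \<partial>nu)"
  have f: "f \<in> borel_measurable nu" "(\<integral>\<^sup>+z. ennreal ((f z)\<^sup>2) \<partial>nu) < \<infinity>" "Y \<in> borel_measurable M"
    using Y unfolding compensated_poisson_integral_def by blast+
  have g: "g \<in> borel_measurable nu" "(\<integral>\<^sup>+z. ennreal ((g z)\<^sup>2) \<partial>nu) < \<infinity>" "Z \<in> borel_measurable M"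
    using Z unfolding compensated_poisson_integral_def by blast+
  have fg: "(\<lambda>z. f z - g z) \<in> borel_measurable nu" "(\<integral>\<^sup>+z. ennreal ((f z - g z)\<^sup>2) \<partial>nu) < \<infinity>"
    using f g False by (auto simp: less_top)
  obtain A where A: "range A \<subseteq> sets nu" "(\<Union>i. A i) = space nu" "\<And>i. emeasure nu (A i) \<noteq> \<infinity>" "incseq A"
    using sigma_finite_measure.sigma_finite_incseq[OF sf] by blast
  have A_sets: "A n \<in> sets nu" and A_fin: "emeasure nu (A n) < \<infinity>" for n
    using A by (auto simp: less_top)
  define T where "T u n x = (\<integral>z. u z * indicator (A n) z \<partial>N x) - (\<integral>z. u z * indicator (A n) z \<partial>nu)"
    for u :: "'b \<Rightarrow> real" and n x
  have T_meas: "T u n \<in> borel_measurable M" if "u \<in> borel_measurable nu" for u n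
    unfolding T_def using that A_sets by (intro borel_measurable_diff integral_N_measurable) auto
  have lim_Y: "(\<lambda>n. \<integral>\<^sup>+x. ennreal ((Y x - T f n x)\<^sup>2) \<partial>M) \<longlonglongrightarrow> 0"
    unfolding T_def by (rule compensated_poisson_integral_tendsto[OF Y A(1,2,4) A_fin])
  have lim_Z: "(\<lambda>n. \<integral>\<^sup>+x. ennreal ((Z x - T g n x)\<^sup>2) \<partial>M) \<longlonglongrightarrow> 0"
    unfolding T_def by (rule compensated_poisson_integral_tendsto[OF Z A(1,2,4) A_fin])
  have T_diff: "AE x in M. T (\<lambda>z. f z - g z) n x = T f n x - T g n x" for n
    using L2_truncation_integrable(2)[OF f(1,2) A_sets[of n] A_fin[of n]]
      L2_truncation_integrable(2)[OF g(1,2) A_sets[of n] A_fin[of n]]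
  proof eventually_elim
    case (elim x)
    then show ?case
      using L2_truncation_integrable(1)[OF f(1,2) A_sets[of n] A_fin[of n]]
        L2_truncation_integrable(1)[OF g(1,2) A_sets[of n] A_fin[of n]]
      by (simp add: T_def left_diff_distrib)
  qed
  have T_bound: "(\<integral>\<^sup>+x. ennreal ((T (\<lambda>z. f z - g z) n x)\<^sup>2) \<partial>M) \<le> 4 * K" for n
  proof -
    have "(\<integral>\<^sup>+x. ennreal ((T (\<lambda>z. f z - g z) n x)\<^sup>2) \<partial>M)
        \<le> 4 * (\<integral>\<^sup>+z. ennreal (((f z - g z) * indicator (A n) z)\<^sup>2) \<partial>nu)"
      unfolding T_def
      by (rule compensated_integral_L2_bound) (use fg A_sets L2_restrict_L1[OF fg A_sets A_fin] in auto)
    also have "\<dots> \<le> 4 * K"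
      unfolding K_def by (intro mult_left_mono nn_integral_mono) (auto simp: indicator_def)
    finally show ?thesis .
  qed
  have bound: "(\<integral>\<^sup>+x. ennreal ((Y x - Z x)\<^sup>2) \<partial>M)
      \<le> 3 * (\<integral>\<^sup>+x. ennreal ((Y x - T f n x)\<^sup>2) \<partial>M) + 3 * (\<integral>\<^sup>+x. ennreal ((Z x - T g n x)\<^sup>2) \<partial>M)
        + 12 * K" for n
  proof -
    have "AE x in M. Y x - Z x = (Y x - T f n x) - (Z x - T g n x) + T (\<lambda>z. f z - g z) n x"
      using T_diff[of n] by eventually_elim simp
    then have "(\<integral>\<^sup>+x. ennreal ((Y x - Z x)\<^sup>2) \<partial>M)
        \<le> 3 * (\<integral>\<^sup>+x. ennreal ((Y x - T f n x)\<^sup>2) \<partial>M) + 3 * (\<integral>\<^sup>+x. ennreal ((Z x - T g n x)\<^sup>2) \<partial>M)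
          + 3 * (\<integral>\<^sup>+x. ennreal ((T (\<lambda>z. f z - g z) n x)\<^sup>2) \<partial>M)"
      using f(1,3) g(1,3) fg(1) T_meas by (intro nn_integral_square_split3) auto
    also have "\<dots> \<le> 3 * (\<integral>\<^sup>+x. ennreal ((Y x - T f n x)\<^sup>2) \<partial>M)
        + 3 * (\<integral>\<^sup>+x. ennreal ((Z x - T g n x)\<^sup>2) \<partial>M) + 3 * (4 * K)"
      using T_bound[of n] by (intro add_left_mono mult_left_mono) auto
    finally show ?thesis
      by (simp add: mult.assoc[symmetric])
  qed
  have "(\<lambda>n. 3 * (\<integral>\<^sup>+x. ennreal ((Y x - T f n x)\<^sup>2) \<partial>M) + 3 * (\<integral>\<^sup>+x. ennreal ((Z x - T g n x)\<^sup>2) \<partial>M)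
        + 12 * K) \<longlonglongrightarrow> 3 * 0 + 3 * 0 + 12 * K"
    by (intro tendsto_add tendsto_const ennreal_tendsto_cmult lim_Y lim_Z) simp_all
  then have "(\<integral>\<^sup>+x. ennreal ((Y x - Z x)\<^sup>2) \<partial>M) \<le> 3 * 0 + 3 * 0 + 12 * K"
    by (rule LIMSEQ_le_const) (use bound in blast)
  then show ?thesis
    by (simp add: K_def)
qed

end

section \<open>Chaining along dyadic points\<close>

lemma dyadic_points_in_unit_interval:
  fixes n k :: nat
  assumes "k < 2 ^ n"
  shows "real k / 2 ^ n \<in> {0..1}" and "(real k + 1) / 2 ^ n \<in> {0..1}"
proof -
  have "real k + 1 \<le> 2 ^ n"
    using assms by (metis Suc_leI of_nat_Suc of_nat_le_iff of_nat_numeral of_nat_power add.commute)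
  then have "real k \<le> 2 ^ n" by linarith
  with \<open>real k + 1 \<le> 2 ^ n\<close> show "real k / 2 ^ n \<in> {0..1}" and "(real k + 1) / 2 ^ n \<in> {0..1}"
    by (auto simp: divide_le_eq_1)
qed

text \<open>Telescoping along the binary expansion: a dyadic point of level n is reached from 0 by at
  most one increment of each level up to n.\<close>
lemma dyadic_chain_bound:
  fixes Y :: "real \<Rightarrow> real" and b :: "nat \<Rightarrow> real"
  assumes Y0: "\<bar>Y 0\<bar> \<le> a"
    and incr: "\<And>n k. k < 2 ^ n \<Longrightarrow> \<bar>Y ((real k + 1) / 2 ^ n) - Y (real k / 2 ^ n)\<bar> \<le> b n"
  shows "k \<le> 2 ^ n \<Longrightarrow> \<bar>Y (real k / 2 ^ n)\<bar> \<le> a + (\<Sum>i\<le>n. b i)"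
proof (induction n arbitrary: k)
  case 0
  then have "k = 0 \<or> k = 1" by auto
  then show ?case
    using Y0 incr[of 0 0] by auto
next
  case (Suc n)
  have b_nonneg: "0 \<le> b (Suc n)"
    using incr[of 0 "Suc n"] by (smt (verit) abs_ge_zero zero_less_power zero_less_numeral)
  obtain m where "k = 2 * m \<or> k = 2 * m + 1" by (metis oddE evenE)
  then show ?case
  proof
    assume k: "k = 2 * m"
    then have "\<bar>Y (real m / 2 ^ n)\<bar> \<le> a + (\<Sum>i\<le>n. b i)"
      using Suc by (intro Suc.IH) simp
    moreover have "real k / 2 ^ Suc n = real m / 2 ^ n"
      using k by simp
    ultimately show ?thesis
      using b_nonneg by simp
  next
    assume k: "k = 2 * m + 1"
    then have m_less: "2 * m < 2 ^ Suc n"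
      using Suc.prems by simp
    then have IH: "\<bar>Y (real m / 2 ^ n)\<bar> \<le> a + (\<Sum>i\<le>n. b i)"
      by (intro Suc.IH) simp
    have "real (2 * m) / 2 ^ Suc n = real m / 2 ^ n" and "(real (2 * m) + 1) / 2 ^ Suc n = real k / 2 ^ Suc n"
      using k by simp_all
    then have "\<bar>Y (real k / 2 ^ Suc n) - Y (real m / 2 ^ n)\<bar> \<le> b (Suc n)"
      using incr[OF m_less] by simp
    then show ?thesis
      using IH by simp
  qed
qed

lemma sup_bound_from_dyadic_increments:
  fixes Y :: "real \<Rightarrow> real" and b :: "nat \<Rightarrow> real"
  assumes cont: "continuous_on {0..1} Y" and Y0: "\<bar>Y 0\<bar> \<le> a"
    and incr: "\<And>n k. k < 2 ^ n \<Longrightarrow> \<bar>Y ((real k + 1) / 2 ^ n) - Y (real k / 2 ^ n)\<bar> \<le> b n"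
    and b_sum: "\<And>n. (\<Sum>i\<le>n. b i) \<le> S"
  shows "(SUP t\<in>{0..1}. \<bar>Y t\<bar>) \<le> a + S"
proof (rule cSUP_least)
  fix t :: real assume t: "t \<in> {0..1}"
  define tn where "tn n = real (nat \<lfloor>t * 2 ^ n\<rfloor>) / 2 ^ n" for n :: nat
  have tn_eq: "tn n = \<lfloor>t * 2 ^ n\<rfloor> / 2 ^ n" for n
    using t by (simp add: tn_def)
  have tn_le: "tn n \<le> t" for n
    unfolding tn_eq by (simp add: divide_le_eq)
  have tn_ge: "t - 1 / 2 ^ n \<le> tn n" for n :: nat
  proof -
    have "(t * 2 ^ n - 1) / 2 ^ n \<le> \<lfloor>t * 2 ^ n\<rfloor> / 2 ^ n"
      by (intro divide_right_mono) (linarith, simp)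
    then show ?thesis
      unfolding tn_eq by (simp add: diff_divide_distrib)
  qed
  have tn_in: "tn n \<in> {0..1}" for n
  proof -
    have "0 \<le> tn n" by (simp add: tn_def)
    then show ?thesis using tn_le[of n] t by simp
  qed
  have k_le: "nat \<lfloor>t * 2 ^ n\<rfloor> \<le> 2 ^ n" for n :: nat
  proof -
    have "t * 2 ^ n \<le> 2 ^ n" using t by simp
    then have "\<lfloor>t * 2 ^ n\<rfloor> \<le> 2 ^ n"
      by (metis floor_le_numeral floor_mono floor_of_nat of_nat_numeral of_nat_power floor_of_int
          of_int_of_nat_eq)
    then show ?thesis by (simp add: nat_le_iff)
  qed
  have bounded: "\<bar>Y (tn n)\<bar> \<le> a + S" for n
    using dyadic_chain_bound[OF Y0 incr k_le[of n]] b_sum[of n] unfolding tn_def by linarith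
  have lower_lim: "(\<lambda>n::nat. t - 1 / 2 ^ n) \<longlonglongrightarrow> t - 0"
    by (intro tendsto_diff tendsto_const) (simp add: LIMSEQ_divide_realpow_zero)
  have "tn \<longlonglongrightarrow> t"
    by (rule tendsto_sandwich[OF _ _ lower_lim[simplified] tendsto_const]) (use tn_ge tn_le in auto)
  then have "(\<lambda>n. Y (tn n)) \<longlonglongrightarrow> Y t"
    by (rule continuous_on_tendsto_compose[OF cont _ t]) (use tn_in in auto)
  then have "(\<lambda>n. \<bar>Y (tn n)\<bar>) \<longlonglongrightarrow> \<bar>Y t\<bar>"
    by (rule tendsto_rabs)
  then show "\<bar>Y t\<bar> \<le> a + S"
    by (rule LIMSEQ_le_const2) (use bounded in blast)
qed (simp)

lemma nn_integral_chebyshev: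
  fixes V :: "'a \<Rightarrow> real"
  assumes V: "V \<in> borel_measurable M" and c: "0 < c"
  shows "emeasure M {x\<in>space M. c < \<bar>V x\<bar>} \<le> ennreal (1 / c\<^sup>2) * (\<integral>\<^sup>+x. ennreal ((V x)\<^sup>2) \<partial>M)"
proof -
  have "{x\<in>space M. c < \<bar>V x\<bar>} \<subseteq> {x\<in>space M. 1 \<le> ennreal (1 / c\<^sup>2) * ennreal ((V x)\<^sup>2)}"
  proof safe
    fix x assume "c < \<bar>V x\<bar>"
    then have "c\<^sup>2 \<le> (V x)\<^sup>2"
      using c by (metis abs_le_square_iff less_imp_le abs_of_pos)
    then have "1 \<le> 1 / c\<^sup>2 * (V x)\<^sup>2"
      using c by (simp add: field_simps)
    then show "1 \<le> ennreal (1 / c\<^sup>2) * ennreal ((V x)\<^sup>2)"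
      by (simp add: ennreal_mult[symmetric] ennreal_leI del: ennreal_mult)
  qed
  then have "emeasure M {x\<in>space M. c < \<bar>V x\<bar>}
      \<le> emeasure M {x\<in>space M. 1 \<le> ennreal (1 / c\<^sup>2) * ennreal ((V x)\<^sup>2)}"
    using V by (intro emeasure_mono) measurable
  also have "\<dots> \<le> ennreal (1 / c\<^sup>2) * (\<integral>\<^sup>+x. ennreal ((V x)\<^sup>2) * indicator (space M) x \<partial>M)"
    using V by (intro nn_integral_Markov_inequality) (measurable, auto)
  also have "(\<integral>\<^sup>+x. ennreal ((V x)\<^sup>2) * indicator (space M) x \<partial>M) = (\<integral>\<^sup>+x. ennreal ((V x)\<^sup>2) \<partial>M)"
    by (rule nn_integral_cong) simp
  finally show ?thesis .
qed

section \<open>A Kolmogorov-type maximal inequality\<close>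

text \<open>Increments at dyadic level n are allowed to reach l r^n with r = 2^(-\<alpha>/4) < 1; the
  geometric choice keeps their total below \<delta>/2 while the union bound over the 2^n
  increments of level n stays summable.\<close>
definition chaining_ratio :: "real \<Rightarrow> real" where
  "chaining_ratio \<alpha> = 2 powr (- (\<alpha> / 4))"

text \<open>The constant in front of B in the maximal inequality: the sum over all levels n of the
  union bounds (r^2)^n / l^2 with l = \<delta>(1 - r)/2.\<close>
definition chaining_constant :: "real \<Rightarrow> real \<Rightarrow> real" where
  "chaining_constant \<alpha> \<delta> = 1 / (1 - (chaining_ratio \<alpha>)\<^sup>2) / (\<delta> * (1 - chaining_ratio \<alpha>) / 2)\<^sup>2"

lemma chaining_ratio_bounds:
  assumes "0 < \<alpha>" shows "0 < chaining_ratio \<alpha>" and "chaining_ratio \<alpha> < 1"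
  unfolding chaining_ratio_def using assms by (auto intro: powr_less_one)

text \<open>The union bound at level n: 2^n increments, each of second moment (2^-n)^(1+\<alpha>) B.\<close>
lemma chaining_level_identity:
  fixes \<alpha> l :: real
  assumes "0 < \<alpha>" "l \<noteq> 0"
  shows "2 ^ n * (1 / 2 ^ n) powr (1 + \<alpha>) / (l * chaining_ratio \<alpha> ^ n)\<^sup>2 = ((chaining_ratio \<alpha>)\<^sup>2) ^ n / l\<^sup>2"
proof -
  define r where "r = chaining_ratio \<alpha>"
  have r_pos: "0 < r" unfolding r_def by (rule chaining_ratio_bounds[OF assms(1)])
  have r4: "r ^ 4 = 2 powr (- \<alpha>)" unfolding r_def chaining_ratio_def by (simp add: powr_power)
  have inv: "(1 / 2 ^ n :: real) = 2 powr (- real n)" by (simp add: powr_minus_divide powr_realpow)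
  have "(1 / 2 ^ n :: real) powr (1 + \<alpha>) = 2 powr (- real n) * 2 powr (real n * (- \<alpha>))"
    unfolding inv by (simp add: powr_powr powr_add[symmetric] algebra_simps)
  also have "\<dots> = (1 / 2 ^ n) * (r ^ 4) ^ n"
    unfolding r4 by (simp add: powr_power inv)
  finally have "2 ^ n * (1 / 2 ^ n) powr (1 + \<alpha>) / (l * r ^ n)\<^sup>2 = (r ^ 4) ^ n / (l\<^sup>2 * (r ^ n)\<^sup>2)"
    by (simp add: power_mult_distrib)
  also have "\<dots> = (r\<^sup>2) ^ n / l\<^sup>2"
    using r_pos assms(2) by (simp add: field_simps power_mult[symmetric] power_add[symmetric] mult.commute)
  finally show ?thesis unfolding r_def .
qed

lemma chaining_constant_sums:
  assumes "0 < \<alpha>" "0 < \<delta>"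
  shows "(\<lambda>n. ((chaining_ratio \<alpha>)\<^sup>2) ^ n / (\<delta> * (1 - chaining_ratio \<alpha>) / 2)\<^sup>2) sums chaining_constant \<alpha> \<delta>"
  unfolding chaining_constant_def
  using chaining_ratio_bounds[OF assms(1)]
  by (intro sums_divide geometric_sums) (simp add: abs_square_less_1)

lemma dyadic_level_tail:
  fixes Y :: "real \<Rightarrow> 'a \<Rightarrow> real"
  assumes meas: "\<And>t. t \<in> {0..1} \<Longrightarrow> Y t \<in> borel_measurable M"
    and incr: "\<And>s t. s \<in> {0..1} \<Longrightarrow> t \<in> {0..1} \<Longrightarrow>
      (\<integral>\<^sup>+x. ennreal ((Y t x - Y s x)\<^sup>2) \<partial>M) \<le> ennreal (\<bar>t - s\<bar> powr (1 + \<alpha>)) * B"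
    and b: "0 < b"
  shows "emeasure M (\<Union>k<2 ^ n. {x\<in>space M. b < \<bar>Y ((real k + 1) / 2 ^ n) x - Y (real k / 2 ^ n) x\<bar>})
    \<le> ennreal (2 ^ n * (1 / 2 ^ n) powr (1 + \<alpha>) / b\<^sup>2) * B"
proof -
  let ?U = "\<lambda>k. {x\<in>space M. b < \<bar>Y ((real k + 1) / 2 ^ n) x - Y (real k / 2 ^ n) x\<bar>}"
  have D_meas: "(\<lambda>x. Y ((real k + 1) / 2 ^ n) x - Y (real k / 2 ^ n) x) \<in> borel_measurable M"
    if "k < 2 ^ n" for k
    using meas[OF dyadic_points_in_unit_interval(2)[OF that]] meas[OF dyadic_points_in_unit_interval(1)[OF that]]
    by measurable
  have "emeasure M (\<Union>k<2 ^ n. ?U k) \<le> (\<Sum>k<2 ^ n. emeasure M (?U k))"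
    using D_meas by (intro emeasure_subadditive_finite) auto
  also have "\<dots> \<le> (\<Sum>k<(2::nat) ^ n. ennreal (1 / b\<^sup>2) * (ennreal ((1 / 2 ^ n) powr (1 + \<alpha>)) * B))"
  proof (rule sum_mono)
    fix k assume "k \<in> {..<(2::nat) ^ n}"
    then have k: "k < 2 ^ n" by simp
    have "emeasure M (?U k)
        \<le> ennreal (1 / b\<^sup>2) * (\<integral>\<^sup>+x. ennreal ((Y ((real k + 1) / 2 ^ n) x - Y (real k / 2 ^ n) x)\<^sup>2) \<partial>M)"
      by (rule nn_integral_chebyshev[OF D_meas[OF k] b])
    also have "\<dots> \<le> ennreal (1 / b\<^sup>2) * (ennreal ((1 / 2 ^ n) powr (1 + \<alpha>)) * B)"
      using incr[OF dyadic_points_in_unit_interval(1,2)[OF k]]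
      by (intro mult_left_mono) (simp_all add: add_divide_distrib)
    finally show "emeasure M (?U k) \<le> ennreal (1 / b\<^sup>2) * (ennreal ((1 / 2 ^ n) powr (1 + \<alpha>)) * B)" .
  qed
  also have "\<dots> = ennreal (2 ^ n * (1 / 2 ^ n) powr (1 + \<alpha>) / b\<^sup>2) * B"
    by (simp add: ennreal_of_nat_eq_real_of_nat ennreal_mult[symmetric] mult_ac)
  finally show ?thesis .
qed

lemma geometric_thresholds_sum:
  fixes r \<delta> :: real
  assumes r: "0 < r" "r < 1" and \<delta>: "0 \<le> \<delta>"
  shows "(\<Sum>i\<le>n. \<delta> * (1 - r) / 2 * r ^ i) \<le> \<delta> / 2"
proof -
  have sums: "(\<lambda>i. \<delta> * (1 - r) / 2 * r ^ i) sums (\<delta> * (1 - r) / 2 * (1 / (1 - r)))"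
    using r by (intro sums_mult geometric_sums) simp
  then have "(\<Sum>i\<le>n. \<delta> * (1 - r) / 2 * r ^ i) \<le> (\<Sum>i. \<delta> * (1 - r) / 2 * r ^ i)"
    using r \<delta> by (intro sum_le_suminf) (auto simp: sums_iff)
  also have "\<dots> = \<delta> * (1 - r) / 2 * (1 / (1 - r))"
    using sums by (rule sums_unique[symmetric])
  also have "\<dots> = \<delta> / 2"
    using r by (simp add: field_simps)
  finally show ?thesis .
qed

theorem dyadic_chaining_tail_bound:
  fixes Y :: "real \<Rightarrow> 'a \<Rightarrow> real" and A B :: ennreal
  assumes meas: "\<And>t. t \<in> {0..1} \<Longrightarrow> Y t \<in> borel_measurable M"
    and cont: "\<And>x. x \<in> space M \<Longrightarrow> continuous_on {0..1} (\<lambda>t. Y t x)"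
    and start: "(\<integral>\<^sup>+x. ennreal ((Y 0 x)\<^sup>2) \<partial>M) \<le> A"
    and incr: "\<And>s t. s \<in> {0..1} \<Longrightarrow> t \<in> {0..1} \<Longrightarrow>
      (\<integral>\<^sup>+x. ennreal ((Y t x - Y s x)\<^sup>2) \<partial>M) \<le> ennreal (\<bar>t - s\<bar> powr (1 + \<alpha>)) * B"
    and \<alpha>: "0 < \<alpha>" and \<delta>: "0 < \<delta>"
  shows "emeasure M {x \<in> space M. \<delta> < (SUP t\<in>{0..1}. \<bar>Y t x\<bar>)}
    \<le> ennreal (4 / \<delta>\<^sup>2) * A + ennreal (chaining_constant \<alpha> \<delta>) * B"
proof -
  define r where "r = chaining_ratio \<alpha>"
  define l where "l = \<delta> * (1 - r) / 2"
  define b where "b n = l * r ^ n" for n :: nat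
  have r: "0 < r" "r < 1" unfolding r_def by (rule chaining_ratio_bounds[OF \<alpha>])+
  have l: "0 < l" unfolding l_def using \<delta> r by simp
  have b_pos: "0 < b n" for n unfolding b_def using l r by simp
  have b_sum: "(\<Sum>i\<le>n. b i) \<le> \<delta> / 2" for n
    unfolding b_def l_def using geometric_thresholds_sum[OF r] \<delta> by simp
  define U0 where "U0 = {x\<in>space M. \<delta> / 2 < \<bar>Y 0 x\<bar>}"
  define U where "U n = (\<Union>k<2 ^ n. {x\<in>space M. b n < \<bar>Y ((real k + 1) / 2 ^ n) x - Y (real k / 2 ^ n) x\<bar>})"
    for n :: nat
  have U0_sets: "U0 \<in> sets M" unfolding U0_def using meas[of 0] by measurable
  have U_sets: "U n \<in> sets M" for n
    unfolding U_def using meas dyadic_points_in_unit_interval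
    by (intro sets.finite_UN) (auto intro!: borel_measurable_diff)
  have cover: "{x \<in> space M. \<delta> < (SUP t\<in>{0..1}. \<bar>Y t x\<bar>)} \<subseteq> U0 \<union> (\<Union>n. U n)"
  proof (rule subsetI, rule ccontr)
    fix x assume x: "x \<in> {x \<in> space M. \<delta> < (SUP t\<in>{0..1}. \<bar>Y t x\<bar>)}" and "x \<notin> U0 \<union> (\<Union>n. U n)"
    then have "\<bar>Y 0 x\<bar> \<le> \<delta> / 2"
      and "\<And>n k. k < 2 ^ n \<Longrightarrow> \<bar>Y ((real k + 1) / 2 ^ n) x - Y (real k / 2 ^ n) x\<bar> \<le> b n"
      by (auto simp: U0_def U_def not_less)
    then have "(SUP t\<in>{0..1}. \<bar>Y t x\<bar>) \<le> \<delta> / 2 + \<delta> / 2"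
      using sup_bound_from_dyadic_increments[OF cont _ _ b_sum] x by blast
    then show False using x by simp
  qed
  have U0_bound: "emeasure M U0 \<le> ennreal (4 / \<delta>\<^sup>2) * A"
  proof -
    have "emeasure M U0 \<le> ennreal (1 / (\<delta> / 2)\<^sup>2) * (\<integral>\<^sup>+x. ennreal ((Y 0 x)\<^sup>2) \<partial>M)"
      unfolding U0_def using \<delta> by (intro nn_integral_chebyshev meas) simp_all
    also have "\<dots> \<le> ennreal (4 / \<delta>\<^sup>2) * A"
      using start by (intro mult_mono) (simp_all add: power_divide)
    finally show ?thesis .
  qed
  have U_bound: "emeasure M (U n) \<le> ennreal ((r\<^sup>2) ^ n / l\<^sup>2) * B" for n
    using dyadic_level_tail[OF meas incr b_pos[of n], where n = n] chaining_level_identity[OF \<alpha>, of l n] l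
    unfolding U_def b_def r_def by simp
  have "emeasure M {x \<in> space M. \<delta> < (SUP t\<in>{0..1}. \<bar>Y t x\<bar>)} \<le> emeasure M (U0 \<union> (\<Union>n. U n))"
    using U0_sets U_sets by (intro emeasure_mono[OF cover]) auto
  also have "\<dots> \<le> emeasure M U0 + (\<Sum>n. emeasure M (U n))"
    using U0_sets U_sets
    by (intro order.trans[OF emeasure_subadditive add_left_mono] emeasure_subadditive_countably) auto
  also have "\<dots> \<le> ennreal (4 / \<delta>\<^sup>2) * A + (\<Sum>n. ennreal ((r\<^sup>2) ^ n / l\<^sup>2)) * B"
    using U_bound by (intro add_mono U0_bound) (simp add: suminf_le summableI flip: ennreal_suminf_multc)
  also have "(\<Sum>n. ennreal ((r\<^sup>2) ^ n / l\<^sup>2)) = ennreal (chaining_constant \<alpha> \<delta>)"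
    using chaining_constant_sums[OF \<alpha> \<delta>] unfolding r_def l_def
    by (subst suminf_ennreal2) (auto simp: sums_iff)
  finally show ?thesis .
qed

section \<open>Shrinking the window of small jumps\<close>

text \<open>Integrals over the window 0 < |u| < \<epsilon> of a finite measure vanish as \<epsilon> \<rightarrow> 0,
  since the windows decrease to the empty set.\<close>
lemma nn_integral_small_jumps_tendsto_0:
  fixes g :: "'z \<Rightarrow> ennreal" and p :: "'z \<Rightarrow> real"
  assumes g: "g \<in> borel_measurable Q" and p: "p \<in> borel_measurable Q" and fin: "(\<integral>\<^sup>+z. g z \<partial>Q) < \<infinity>"
  shows "((\<lambda>\<epsilon>. \<integral>\<^sup>+z. g z * indicator {u. 0 < \<bar>u\<bar> \<and> \<bar>u\<bar> < \<epsilon>} (p z) \<partial>Q) \<longlongrightarrow> 0) (at_right 0)"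
proof -
  define T where "T n z = g z * indicator {u. 0 < \<bar>u\<bar> \<and> \<bar>u\<bar> < 1 / real (Suc n)} (p z)" for n z
  have T_meas: "T n \<in> borel_measurable Q" for n
    unfolding T_def using g p by measurable
  have window_mono: "\<epsilon> \<le> \<epsilon>' \<Longrightarrow> g z * indicator {u. 0 < \<bar>u\<bar> \<and> \<bar>u\<bar> < \<epsilon>} (p z)
      \<le> g z * indicator {u. 0 < \<bar>u\<bar> \<and> \<bar>u\<bar> < \<epsilon>'} (p z)" for \<epsilon> \<epsilon>' z
    by (intro mult_left_mono) (auto simp: indicator_def)
  have T_dec: "decseq T"
    unfolding T_def by (intro decseq_SucI le_funI window_mono) (simp add: frac_le)
  have T_le: "T n z \<le> g z" for n z
    unfolding T_def by (simp add: indicator_def)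
  have T_fin: "(\<integral>\<^sup>+z. T n z \<partial>Q) < \<infinity>" for n
    using nn_integral_mono[of Q "T n" g, OF T_le] fin by (rule le_less_trans)
  have T_INF: "(INF n. T n z) = 0" for z
  proof (cases "p z = 0")
    case True
    then have "T 0 z = 0" by (simp add: T_def)
    then show ?thesis by (metis INF_lower2 UNIV_I le_zero_eq)
  next
    case False
    then obtain m where m: "0 < m" "inverse (real m) < \<bar>p z\<bar>"
      using ex_inverse_of_nat_less[of "\<bar>p z\<bar>"] by auto
    then obtain n where "m = Suc n"
      using gr0_implies_Suc by blast
    with m have "inverse (real (Suc n)) < \<bar>p z\<bar>" by simp
    then have "T n z = 0" by (simp add: T_def indicator_def divide_inverse)
    then show ?thesis by (metis INF_lower2 UNIV_I le_zero_eq)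
  qed
  have "(INF n. \<integral>\<^sup>+z. T n z \<partial>Q) = (\<integral>\<^sup>+z. (INF n. T n z) \<partial>Q)"
    by (rule nn_integral_monotone_convergence_INF_decseq[OF T_dec T_meas T_fin, symmetric])
  then have INF_0: "(INF n. \<integral>\<^sup>+z. T n z \<partial>Q) = 0"
    by (simp add: T_INF)
  show ?thesis
  proof (rule order_tendstoI)
    fix a :: ennreal assume "0 < a"
    then obtain n where n: "(\<integral>\<^sup>+z. T n z \<partial>Q) < a"
      unfolding INF_0[symmetric] by (auto simp: INF_less_iff)
    have "(\<integral>\<^sup>+z. g z * indicator {u. 0 < \<bar>u\<bar> \<and> \<bar>u\<bar> < \<epsilon>} (p z) \<partial>Q) < a"
      if "\<epsilon> < 1 / real (Suc n)" for \<epsilon>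
    proof -
      have "(\<integral>\<^sup>+z. g z * indicator {u. 0 < \<bar>u\<bar> \<and> \<bar>u\<bar> < \<epsilon>} (p z) \<partial>Q) \<le> (\<integral>\<^sup>+z. T n z \<partial>Q)"
        unfolding T_def using that by (intro nn_integral_mono window_mono) simp
      then show ?thesis using n by (rule le_less_trans)
    qed
    then show "\<forall>\<^sub>F \<epsilon> in at_right 0. (\<integral>\<^sup>+z. g z * indicator {u. 0 < \<bar>u\<bar> \<and> \<bar>u\<bar> < \<epsilon>} (p z) \<partial>Q) < a"
      unfolding eventually_at_right_field by (intro exI[of _ "1 / real (Suc n)"]) auto
  qed simp
qed

lemma hoelder_integrand_increment:
  fixes K :: "real \<Rightarrow> 'w \<Rightarrow> real" and C :: "'w \<Rightarrow> real" and Q :: "(real \<times> 'w) measure"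
  assumes hoelder: "\<And>w. \<bar>K t w - K s w\<bar>\<^sup>2 \<le> C w * d" and C_nonneg: "\<And>w. 0 \<le> C w" and d: "0 \<le> d"
    and meas: "(\<lambda>z. ennreal (C (snd z) * (fst z)\<^sup>2) * indicator S (fst z)) \<in> borel_measurable Q"
  shows "(\<integral>\<^sup>+z. ennreal ((K t (snd z) * fst z * indicator S (fst z) - K s (snd z) * fst z * indicator S (fst z))\<^sup>2) \<partial>Q)
    \<le> ennreal d * (\<integral>\<^sup>+z. ennreal (C (snd z) * (fst z)\<^sup>2) * indicator S (fst z) \<partial>Q)"
proof -
  have "ennreal ((K t w * u * indicator S u - K s w * u * indicator S u)\<^sup>2)
      \<le> ennreal d * (ennreal (C w * u\<^sup>2) * indicator S u)" for u w
  proof -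
    have "(K t w * u * indicator S u - K s w * u * indicator S u)\<^sup>2
        = \<bar>K t w - K s w\<bar>\<^sup>2 * (u\<^sup>2 * indicator S u)"
      by (simp add: indicator_def power2_eq_square algebra_simps)
    also have "\<dots> \<le> C w * d * (u\<^sup>2 * indicator S u)"
      by (intro mult_right_mono hoelder) simp
    finally have "ennreal ((K t w * u * indicator S u - K s w * u * indicator S u)\<^sup>2)
        \<le> ennreal (d * (C w * u\<^sup>2 * indicator S u))"
      by (intro ennreal_leI) (simp add: algebra_simps)
    also have "\<dots> = ennreal d * (ennreal (C w * u\<^sup>2) * indicator S u)"
      using C_nonneg[of w] d by (simp add: ennreal_mult ennreal_indicator)
    finally show ?thesis .
  qed
  then have "(\<integral>\<^sup>+z. ennreal ((K t (snd z) * fst z * indicator S (fst z) - K s (snd z) * fst z * indicator S (fst z))\<^sup>2) \<partial>Q)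
      \<le> (\<integral>\<^sup>+z. ennreal d * (ennreal (C (snd z) * (fst z)\<^sup>2) * indicator S (fst z)) \<partial>Q)"
    by (intro nn_integral_mono)
  also have "\<dots> = ennreal d * (\<integral>\<^sup>+z. ennreal (C (snd z) * (fst z)\<^sup>2) * indicator S (fst z) \<partial>Q)"
    by (rule nn_integral_cmult[OF meas])
  finally show ?thesis .
qed

context poisson_rm
begin

theorem compensated_integral_sup_tail:
  fixes f :: "real \<Rightarrow> 'b \<Rightarrow> real" and Y :: "real \<Rightarrow> 'a \<Rightarrow> real" and A B :: ennreal
  assumes sf: "sigma_finite_measure nu"
    and Y: "\<And>t. t \<in> {0..1} \<Longrightarrow> compensated_poisson_integral M nu N (f t) (Y t)"
    and cont: "\<And>x. x \<in> space M \<Longrightarrow> continuous_on {0..1} (\<lambda>t. Y t x)"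
    and start: "(\<integral>\<^sup>+z. ennreal ((f 0 z)\<^sup>2) \<partial>nu) \<le> A"
    and incr: "\<And>s t. s \<in> {0..1} \<Longrightarrow> t \<in> {0..1} \<Longrightarrow>
      (\<integral>\<^sup>+z. ennreal ((f t z - f s z)\<^sup>2) \<partial>nu) \<le> ennreal (\<bar>t - s\<bar> powr (1 + \<alpha>)) * B"
    and \<alpha>: "0 < \<alpha>" and \<delta>: "0 < \<delta>"
  shows "emeasure M {x \<in> space M. \<delta> < (SUP t\<in>{0..1}. \<bar>Y t x\<bar>)}
    \<le> ennreal (4 / \<delta>\<^sup>2) * (12 * A) + ennreal (chaining_constant \<alpha> \<delta>) * (12 * B)"
proof (rule dyadic_chaining_tail_bound[OF _ cont _ _ \<alpha> \<delta>])
  show "Y t \<in> borel_measurable M" if "t \<in> {0..1}" for t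
    using Y[OF that] unfolding compensated_poisson_integral_def by blast
  have zero: "compensated_poisson_integral M nu N (\<lambda>_. 0) (\<lambda>_. 0)"
    unfolding compensated_poisson_integral_def by simp
  have "(\<integral>\<^sup>+x. ennreal ((Y 0 x - 0)\<^sup>2) \<partial>M) \<le> 12 * (\<integral>\<^sup>+z. ennreal ((f 0 z - 0)\<^sup>2) \<partial>nu)"
    by (rule compensated_poisson_integral_L2_lipschitz[OF sf Y zero]) simp
  also have "\<dots> \<le> 12 * A"
    using start by (intro mult_left_mono) simp_all
  finally show "(\<integral>\<^sup>+x. ennreal ((Y 0 x)\<^sup>2) \<partial>M) \<le> 12 * A"
    by simp
  fix s t :: real assume st: "s \<in> {0..1}" "t \<in> {0..1}"
  have "(\<integral>\<^sup>+x. ennreal ((Y t x - Y s x)\<^sup>2) \<partial>M) \<le> 12 * (\<integral>\<^sup>+z. ennreal ((f t z - f s z)\<^sup>2) \<partial>nu)"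
    by (rule compensated_poisson_integral_L2_lipschitz[OF sf Y[OF st(2)] Y[OF st(1)]])
  also have "\<dots> \<le> 12 * (ennreal (\<bar>t - s\<bar> powr (1 + \<alpha>)) * B)"
    using incr[OF st] by (intro mult_left_mono) simp_all
  finally show "(\<integral>\<^sup>+x. ennreal ((Y t x - Y s x)\<^sup>2) \<partial>M) \<le> ennreal (\<bar>t - s\<bar> powr (1 + \<alpha>)) * (12 * B)"
    by (simp add: mult_ac)
qed

end

lemma enn2real_tendsto_0_from_linear_bound:
  fixes P F G :: "real \<Rightarrow> ennreal"
  assumes bound: "\<forall>\<^sub>F \<epsilon> in at_right 0. P \<epsilon> \<le> ennreal a * F \<epsilon> + ennreal b * G \<epsilon>"
    and F: "(F \<longlongrightarrow> 0) (at_right 0)" and G: "(G \<longlongrightarrow> 0) (at_right 0)"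
  shows "((\<lambda>\<epsilon>. enn2real (P \<epsilon>)) \<longlongrightarrow> 0) (at_right 0)"
proof -
  have "((\<lambda>\<epsilon>. ennreal a * F \<epsilon> + ennreal b * G \<epsilon>) \<longlongrightarrow> ennreal a * 0 + ennreal b * 0) (at_right 0)"
    by (intro tendsto_add ennreal_tendsto_cmult F G) simp_all
  then have "((\<lambda>\<epsilon>. ennreal a * F \<epsilon> + ennreal b * G \<epsilon>) \<longlongrightarrow> ennreal 0) (at_right 0)"
    by simp
  then have "(P \<longlongrightarrow> ennreal 0) (at_right 0)"
    by (intro tendsto_sandwich[OF _ bound tendsto_const]) simp_all
  from tendsto_enn2real[OF this] show ?thesis
    by simp
qed

theorem mainTheorem3:
  fixes M :: "'a measure"
    and nu :: "(real \<times> 'w::polish_space) measure"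
    and N :: "'a \<Rightarrow> (real \<times> 'w) measure"
    and K :: "real \<Rightarrow> 'w \<Rightarrow> real"
    and C :: "'w \<Rightarrow> real"
    and \<alpha> :: real
    and X :: "real \<Rightarrow> real \<Rightarrow> 'a \<Rightarrow> real"
    and \<delta> :: real
  assumes nu_sets: "sets nu = sets (borel :: (real \<times> 'w) measure)"
    and nu_supp: "emeasure nu (- ({-1<..<1} \<times> UNIV)) = 0"
    and nu_sfin: "sigma_finite_measure nu"
    and nu_inf: "\<And>a. 0 < a \<Longrightarrow> a \<le> 1 \<Longrightarrow> emeasure nu ({-a<..<a} \<times> UNIV) = \<infinity>"
    and nu_u2: "(\<integral>\<^sup>+ z. ennreal ((fst z)\<^sup>2) \<partial>nu) < \<infinity>"
    and PRM: "poisson_random_measure M nu N"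
    and K_meas: "(\<lambda>(t, w). K t w) \<in> borel_measurable (restrict_space borel ({0..1} \<times> UNIV))"
    and K_L2: "\<And>t. t \<in> {0..1} \<Longrightarrow>
                 (\<integral>\<^sup>+ z. ennreal ((K t (snd z))\<^sup>2 * (fst z)\<^sup>2) \<partial>nu) < \<infinity>"
    and alpha_pos: "\<alpha> > 0"
    and C_meas: "C \<in> borel_measurable borel"
    and C_nonneg: "\<And>w. C w \<ge> 0"
    and Hoelder: "\<And>s t w. s \<in> {0..1} \<Longrightarrow> t \<in> {0..1} \<Longrightarrow>
                    \<bar>K t w - K s w\<bar>\<^sup>2 \<le> C w * \<bar>t - s\<bar> powr (1 + \<alpha>)"
    and C_int: "(\<integral>\<^sup>+ z. ennreal (C (snd z) * (fst z)\<^sup>2) \<partial>nu) < \<infinity>"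
    and X_int: "\<And>\<epsilon> t. 0 < \<epsilon> \<Longrightarrow> \<epsilon> \<le> 1 \<Longrightarrow> t \<in> {0..1} \<Longrightarrow>
                 compensated_poisson_integral M nu N
                   (\<lambda>z. K t (snd z) * fst z * indicator {u. 0 < \<bar>u\<bar> \<and> \<bar>u\<bar> < \<epsilon>} (fst z))
                   (X \<epsilon> t)"
    and X_cont: "\<And>\<epsilon> x. 0 < \<epsilon> \<Longrightarrow> \<epsilon> \<le> 1 \<Longrightarrow> x \<in> space M \<Longrightarrow>
                 continuous_on {0..1} (\<lambda>t. X \<epsilon> t x)"
    and delta_pos: "\<delta> > 0"
  shows "((\<lambda>\<epsilon>. measure M {x \<in> space M. (SUP t\<in>{0..1}. \<bar>X \<epsilon> t x\<bar>) > \<delta>})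
            \<longlongrightarrow> 0) (at_right 0)"
proof -
  interpret poisson_rm M nu N by (rule poisson_rm.intro[OF PRM])
  define W where "W \<epsilon> = {u::real. 0 < \<bar>u\<bar> \<and> \<bar>u\<bar> < \<epsilon>}" for \<epsilon>
  note X_int_W = X_int[unfolded W_def[symmetric]]
  \<comment> \<open>G0 is the squared integrand of X 1 0 (measurable and \<nu>-integrable by hypothesis); its
     restriction to the window W \<epsilon> is the squared integrand of X \<epsilon> 0.  G1 carries the Hoelder
     constant.  F0 and F1 are the two second-moment constants, which vanish as \<epsilon> \<rightarrow> 0.\<close>
  define G0 where "G0 z = ennreal ((K 0 (snd z) * fst z * indicator (W 1) (fst z))\<^sup>2)" for z
  define G1 where "G1 z = ennreal (C (snd z) * (fst z)\<^sup>2)" for z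
  define F0 where "F0 \<epsilon> = (\<integral>\<^sup>+z. G0 z * indicator (W \<epsilon>) (fst z) \<partial>nu)" for \<epsilon>
  define F1 where "F1 \<epsilon> = (\<integral>\<^sup>+z. G1 z * indicator (W \<epsilon>) (fst z) \<partial>nu)" for \<epsilon>
  have fst_meas: "fst \<in> borel_measurable nu" and snd_meas: "snd \<in> nu \<rightarrow>\<^sub>M (borel :: 'w measure)"
    unfolding measurable_cong_sets[OF nu_sets refl]
    by (rule borel_measurable_continuous_onI, intro continuous_on_fst continuous_on_snd continuous_on_id)+
  have G0: "G0 \<in> borel_measurable nu" "(\<integral>\<^sup>+z. G0 z \<partial>nu) < \<infinity>"
    using X_int_W[of 1 0] unfolding G0_def compensated_poisson_integral_def by auto
  have G1: "G1 \<in> borel_measurable nu" "(\<integral>\<^sup>+z. G1 z \<partial>nu) < \<infinity>"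
    unfolding G1_def using measurable_compose[OF snd_meas C_meas] fst_meas C_int
    by (auto simp: comp_def)
  have G1_window_meas: "(\<lambda>z. G1 z * indicator (W \<epsilon>) (fst z)) \<in> borel_measurable nu" for \<epsilon>
    unfolding W_def
    by (intro borel_measurable_times_ennreal G1(1) measurable_compose[OF fst_meas]
        borel_measurable_indicator) measurable
  have F0_lim: "(F0 \<longlongrightarrow> 0) (at_right 0)" and F1_lim: "(F1 \<longlongrightarrow> 0) (at_right 0)"
    unfolding F0_def[abs_def] F1_def[abs_def] W_def
    by (rule nn_integral_small_jumps_tendsto_0[OF G0(1) fst_meas G0(2)]
        nn_integral_small_jumps_tendsto_0[OF G1(1) fst_meas G1(2)])+
  have tail: "emeasure M {x \<in> space M. \<delta> < (SUP t\<in>{0..1}. \<bar>X \<epsilon> t x\<bar>)}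
      \<le> ennreal (4 / \<delta>\<^sup>2) * (12 * F0 \<epsilon>) + ennreal (chaining_constant \<alpha> \<delta>) * (12 * F1 \<epsilon>)"
    if \<epsilon>: "0 < \<epsilon>" "\<epsilon> \<le> 1" for \<epsilon>
  proof (rule compensated_integral_sup_tail[OF nu_sfin X_int_W[OF \<epsilon>] X_cont[OF \<epsilon>] _ _ alpha_pos delta_pos])
    show "(\<integral>\<^sup>+z. ennreal ((K 0 (snd z) * fst z * indicator (W \<epsilon>) (fst z))\<^sup>2) \<partial>nu) \<le> F0 \<epsilon>"
      unfolding F0_def G0_def W_def using \<epsilon> by (intro nn_integral_mono) (auto simp: indicator_def)
    show "(\<integral>\<^sup>+z. ennreal ((K t (snd z) * fst z * indicator (W \<epsilon>) (fst z)
            - K s (snd z) * fst z * indicator (W \<epsilon>) (fst z))\<^sup>2) \<partial>nu)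
        \<le> ennreal (\<bar>t - s\<bar> powr (1 + \<alpha>)) * F1 \<epsilon>" if "s \<in> {0..1}" "t \<in> {0..1}" for s t
      unfolding F1_def G1_def using G1_window_meas[of \<epsilon>, unfolded G1_def] Hoelder[OF that] C_nonneg
      by (intro hoelder_integrand_increment) auto
  qed
  have "\<forall>\<^sub>F \<epsilon> in at_right 0. emeasure M {x \<in> space M. \<delta> < (SUP t\<in>{0..1}. \<bar>X \<epsilon> t x\<bar>)}
      \<le> ennreal (4 / \<delta>\<^sup>2) * (12 * F0 \<epsilon>) + ennreal (chaining_constant \<alpha> \<delta>) * (12 * F1 \<epsilon>)"
    unfolding eventually_at_right_field by (rule exI[of _ 1]) (auto intro: tail)
  moreover have "((\<lambda>\<epsilon>. 12 * F0 \<epsilon>) \<longlongrightarrow> 0) (at_right 0)" "((\<lambda>\<epsilon>. 12 * F1 \<epsilon>) \<longlongrightarrow> 0) (at_right 0)"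
    using ennreal_tendsto_cmult[of 12, OF _ F0_lim] ennreal_tendsto_cmult[of 12, OF _ F1_lim] by simp_all
  ultimately show ?thesis
    unfolding measure_def by (rule enn2real_tendsto_0_from_linear_bound)
qed

end
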